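(* For $f\in\mathcal A$ the following are equivalent: (1) $f\in\mathcal J$; (2) $f$ has zero sums at every $v\in\mathrm{Cu}_2\setminus\{\lozenge\}$ without symmetric core; (3) there are no $g,h\in\mathcal A$ with $g\#f\#h=\delta_e$. In particular $\mathcal J=\{f\in\mathcal A:\text{there are no }g,h\in\mathcal A\text{ with }g\#f\#h=\delta_e\}$, and $\mathcal J$ is the unique maximal two-sided ideal of $\mathcal A$.
   Context: Let $\mathrm{Cu}_2$ be the involutive monoid with identity $e$ and zero element $\lozenge$ (so $\lozenge t=\lozenge=t\lozenge$ for all $t$), generated by $s_1,s_2,s_1^*,s_2^*$ subject to $s_1^*s_1=e=s_2^*s_2$ and $s_1^*s_2=\lozenge=s_2^*s_1$, with involution $t\mapsto t^*$ satisfying $(t^* )^*=t$, $(tu)^*=u^*t^*$. Let $\mathbf I_0=\{\emptyset\}$, $\mathbf I_n=\{1,2\}^n$, $\mathbf I=\bigcup_{n\ge0}\mathbf I_n$ (finite words; concatenation written $\mathbf{ij}$), and $\mathbf L=\{1,2\}^{\mathbb N}$; for $\mathbf n=(n_1,n_2,\dots)\in\mathbf L$ put $\mathbf n_0=\emptyset$, $\mathbf n_l=(n_1,\dots,n_l)$. For $\mathbf i=(i_1,\dots,i_k)\in\mathbf I$ put $s_{\mathbf i}=s_{i_1}\cdots s_{i_k}$ ($s_\emptyset=e$) and $s_{\mathbf i}^*=(s_{\mathbf i})^*$. Every $t\in\mathrm{Cu}_2\setminus\{\lozenge\}$ can be written uniquely as $t=s_{\mathbf i}s_{\mathbf j}^*$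 with $\mathbf i,\mathbf j\in\mathbf I$. Let $\mathcal A=\ell^1(\mathrm{Cu}_2\setminus\{\lozenge\})$ with product $\#$ determined by bilinearity and continuity from $\delta_s\#\delta_t=\delta_{st}$ if $st\neq\lozenge$ and $\delta_s\#\delta_t=0$ if $st=\lozenge$; this is a unital Banach $*$-algebra with unit $\delta_e$. Let $f_0=\delta_e-\delta_{s_1s_1^*}-\delta_{s_2s_2^*}$ and let $\mathcal J$ be the closed two-sided ideal of $\mathcal A$ generated by $f_0$. An element $f\in\mathcal A$ has zero sums at $v=s_{\mathbf i}s_{\mathbf j}^*$ if $\sum_{l=0}^\infty f(s_{\mathbf i\mathbf n_l}s_{\mathbf j\mathbf n_l}^* )=0$ for every $\mathbf n\in\mathbf L$. An element $t\in\mathrm{Cu}_2\setminus\{\lozenge\}$ is without symmetric core if whenever $t=s_{\mathbf{mk}}s_{\mathbf{nk}}^*$ with $\mathbf m,\mathbf n,\mathbf k\in\mathbf I$ then $\mathbf k=\emptyset$. *)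

theory Defs
  imports "HOL-Analysis.Analysis"
begin

datatype gen = G1 | G2

type_synonym word = "gen list"

text \<open>A nonzero element s_i s_j^* of Cu_2 is encoded as the pair (i, j) of words
  (unique normal form).  The identity e is ([], []).\<close>
type_synonym cu = "word \<times> word"

text \<open>Product in Cu_2; None stands for the zero element.
  s_i s_j^* s_k s_l^* : s_j^* s_k = s_k' if k = j k', = s_j'^* if j = k j', zero otherwise.\<close>
definition cu_mult :: "cu \<Rightarrow> cu \<Rightarrow> cu option" where
  "cu_mult a b = (case a of (i, j) \<Rightarrow> case b of (k, l) \<Rightarrow>
     (if (\<exists>k'. k = j @ k') then Some (i @ drop (length j) k, l)
      else if (\<exists>j'. j = k @ j') then Some (i, l @ drop (length k) j)
      else None))"

definition Acal :: "(cu \<Rightarrow> complex) set" where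
  "Acal = {f. (\<lambda>t. norm (f t)) summable_on UNIV}"

definition l1norm :: "(cu \<Rightarrow> complex) \<Rightarrow> real" where
  "l1norm f = (\<Sum>\<^sub>\<infinity>t. norm (f t))"

text \<open>The product #, the continuous bilinear extension of delta_s # delta_t = delta_{st}
  (or 0 if st is the zero element).\<close>
definition conv :: "(cu \<Rightarrow> complex) \<Rightarrow> (cu \<Rightarrow> complex) \<Rightarrow> (cu \<Rightarrow> complex)" where
  "conv f g = (\<lambda>t. \<Sum>\<^sub>\<infinity>p. (if cu_mult (fst p) (snd p) = Some t then f (fst p) * g (snd p) else 0))"

definition delta :: "cu \<Rightarrow> (cu \<Rightarrow> complex)" where
  "delta s = (\<lambda>t. if t = s then 1 else 0)"

definition delta_e :: "cu \<Rightarrow> complex" where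
  "delta_e = delta ([], [])"

definition f0 :: "cu \<Rightarrow> complex" where
  "f0 = (\<lambda>t. delta ([], []) t - delta ([G1], [G1]) t - delta ([G2], [G2]) t)"

definition two_sided_ideal :: "(cu \<Rightarrow> complex) set \<Rightarrow> bool" where
  "two_sided_ideal I \<longleftrightarrow> I \<subseteq> Acal \<and> (\<lambda>_. 0) \<in> I
     \<and> (\<forall>f\<in>I. \<forall>g\<in>I. (\<lambda>t. f t + g t) \<in> I)
     \<and> (\<forall>c::complex. \<forall>f\<in>I. (\<lambda>t. c * f t) \<in> I)
     \<and> (\<forall>g\<in>Acal. \<forall>f\<in>I. conv g f \<in> I \<and> conv f g \<in> I)"

definition l1_closed :: "(cu \<Rightarrow> complex) set \<Rightarrow> bool" where
  "l1_closed S \<longleftrightarrow> (\<forall>u f. (\<forall>n. u n \<in> S) \<and> f \<in> Acal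
       \<and> (\<lambda>n. l1norm (\<lambda>t. u n t - f t)) \<longlonglongrightarrow> 0 \<longrightarrow> f \<in> S)"

definition Jcal :: "(cu \<Rightarrow> complex) set" where
  "Jcal = \<Inter> {I. two_sided_ideal I \<and> l1_closed I \<and> f0 \<in> I}"

definition zero_sums_at :: "(cu \<Rightarrow> complex) \<Rightarrow> cu \<Rightarrow> bool" where
  "zero_sums_at f v \<longleftrightarrow> (\<forall>n :: nat \<Rightarrow> gen.
     (\<lambda>l. f (fst v @ map n [0..<l], snd v @ map n [0..<l])) sums 0)"

definition without_symmetric_core :: "cu \<Rightarrow> bool" where
  "without_symmetric_core t \<longleftrightarrow> (\<forall>m n k. t = (m @ k, n @ k) \<longrightarrow> k = [])"

end

theory Submission
  imports Defs
begin

text \<open>Removing a common last letter turns \<open>Cu_2 - {0}\<close> into a forest whose roots are the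
  elements without symmetric core, and \<open>f\<close> has zero sums exactly when its sum along every
  infinite path descending from a root vanishes. Multiplication by elements of Cu_2 maps such
  paths onto such paths (or kills them), so these \<open>f\<close> form a closed ideal; it contains \<open>f0\<close>
  and not \<open>\<delta>\<^sub>e\<close>. Conversely, weighting the translates \<open>s\<^sub>a f0 s\<^sub>b\<^sup>*\<close> by partial sums of
  \<open>f\<close> along ancestors gives a telescoping approximation of \<open>f\<close> in \<open>\<ell>\<^sup>1\<close>, so every such \<open>f\<close>
  lies in \<open>J\<close>. If instead some path sum \<open>\<sigma>\<close> is nonzero, the compression \<open>s\<^sub>a\<^sup>* f s\<^sub>b\<close>,
  with \<open>a\<close>, \<open>b\<close> following the path far down and ending in a marker word, lies within
  \<open>|\<sigma>|\<close> of \<open>\<sigma> \<delta>\<^sub>e\<close> and is therefore invertible by a Neumann series.\<close>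

section \<open>Infinite sums and pushforwards along partial maps\<close>

abbreviation norm_summable :: "('a \<Rightarrow> 'b::real_normed_vector) \<Rightarrow> 'a set \<Rightarrow> bool" where
  "norm_summable F A \<equiv> (\<lambda>x. norm (F x)) summable_on A"

definition pushforward :: "('a \<Rightarrow> 'b option) \<Rightarrow> ('a \<Rightarrow> 'c::banach) \<Rightarrow> 'b \<Rightarrow> 'c" where
  "pushforward h F t = infsum F {x. h x = Some t}"

lemma norm_summable_subset: "norm_summable (F::'a \<Rightarrow> 'b::banach) UNIV \<Longrightarrow> norm_summable F A"
  using summable_on_subset_banach by blast

lemma summable_on_if_norm_summable: "norm_summable (F::'a \<Rightarrow> 'b::banach) UNIV \<Longrightarrow> F summable_on A"
  using norm_summable_subset abs_summable_summable by blast

lemma infsum_diff: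
  fixes f g :: "'a \<Rightarrow> complex"
  assumes "f summable_on A" "g summable_on A"
  shows "infsum (\<lambda>x. f x - g x) A = infsum f A - infsum g A"
  using infsum_add[OF assms(1) summable_on_uminus[THEN iffD2, OF assms(2)]] by (simp add: infsum_uminus)

lemma infsum_norm_Compl:
  assumes "norm_summable (f :: 'a \<Rightarrow> complex) UNIV" "finite F"
  shows "infsum (\<lambda>x. norm (f x)) (- F) = infsum (\<lambda>x. norm (f x)) UNIV - sum (\<lambda>x. norm (f x)) F"
proof -
  have "infsum (\<lambda>x. norm (f x)) (F \<union> - F) = infsum (\<lambda>x. norm (f x)) F + infsum (\<lambda>x. norm (f x)) (- F)"
    by (rule infsum_Un_disjoint) (use assms norm_summable_subset in auto)
  then show ?thesis using assms by simp
qed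

lemma
  fixes F :: "'a \<Rightarrow> 'c::banach" and h :: "'a \<Rightarrow> 'b option"
  assumes F: "norm_summable F UNIV"
  shows norm_summable_pushforward: "norm_summable (pushforward h F) S"
    and infsum_pushforward: "infsum (pushforward h F) S = infsum F (h -` Some ` S)"
    and infsum_norm_pushforward_le:
      "infsum (\<lambda>t. norm (pushforward h F t)) S \<le> infsum (\<lambda>x. norm (F x)) (h -` Some ` S)"
proof -
  let ?Sig = "Sigma S (\<lambda>t. {x. h x = Some t})"
  have inj: "inj_on snd ?Sig" by (auto simp: inj_on_def)
  have img: "snd ` ?Sig = h -` Some ` S" by force
  have reindex: "infsum (\<lambda>(t,x). G x) ?Sig = infsum G (h -` Some ` S)"
    and summable: "G summable_on h -` Some ` S \<Longrightarrow> (\<lambda>(t,x). G x) summable_on ?Sig"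
    for G :: "'a \<Rightarrow> 'd::banach"
    using infsum_reindex[OF inj, of G] summable_on_reindex[OF inj, of G] img
    by (simp_all add: o_def case_prod_unfold)
  have s1: "(\<lambda>(t,x). F x) summable_on ?Sig"
    by (rule summable) (rule summable_on_if_norm_summable[OF F])
  have s2: "(\<lambda>(t,x). norm (F x)) summable_on ?Sig"
    by (rule summable) (rule norm_summable_subset[OF F])
  have fibres: "(\<lambda>t. infsum (\<lambda>x. norm (F x)) {x. h x = Some t}) summable_on S"
    using summable_on_Sigma_banach[OF s2] by simp
  have bound: "norm (pushforward h F t) \<le> infsum (\<lambda>x. norm (F x)) {x. h x = Some t}" for t
    unfolding pushforward_def by (rule norm_infsum_bound[OF norm_summable_subset[OF F]])
  show ps: "norm_summable (pushforward h F) S"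
    by (rule Infinite_Sum.abs_summable_on_comparison_test'[OF fibres bound])
  show "infsum (pushforward h F) S = infsum F (h -` Some ` S)"
    using infsum_Sigma'_banach[OF s1] reindex[of F] unfolding pushforward_def by simp
  have "infsum (\<lambda>t. norm (pushforward h F t)) S
      \<le> infsum (\<lambda>t. infsum (\<lambda>x. norm (F x)) {x. h x = Some t}) S"
    by (rule infsum_mono[OF ps fibres bound])
  then show "infsum (\<lambda>t. norm (pushforward h F t)) S \<le> infsum (\<lambda>x. norm (F x)) (h -` Some ` S)"
    using infsum_Sigma'_banach[OF s2] reindex[of "\<lambda>x. norm (F x)"] by simp
qed

lemma pushforward_comp:
  assumes F: "norm_summable F UNIV"
  shows "pushforward k (pushforward h F) = pushforward (\<lambda>x. Option.bind (h x) k) F"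
proof
  fix t
  have "h -` Some ` {s. k s = Some t} = {x. Option.bind (h x) k = Some t}"
    by (auto simp: bind_eq_Some_conv)
  then show "pushforward k (pushforward h F) t = pushforward (\<lambda>x. Option.bind (h x) k) F t"
    using infsum_pushforward[OF F, of h] by (simp add: pushforward_def)
qed

lemma pushforward_bij: "bij \<sigma> \<Longrightarrow> pushforward k F = pushforward (k \<circ> \<sigma>) (F \<circ> \<sigma>)"
proof
  fix t assume "bij \<sigma>"
  then have "bij_betw \<sigma> {x. k (\<sigma> x) = Some t} {y. k y = Some t}"
    by (auto simp: bij_betw_def bij_def inj_on_def image_iff)
  then show "pushforward k F t = pushforward (k \<circ> \<sigma>) (F \<circ> \<sigma>) t"
    unfolding pushforward_def using infsum_reindex_bij_betw[of \<sigma>, of _ _ F] by (simp add: o_def)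
qed

lemma pushforward_add:
  "norm_summable F UNIV \<Longrightarrow> norm_summable G UNIV \<Longrightarrow>
    pushforward h (\<lambda>x. F x + G x) = (\<lambda>t. pushforward h F t + pushforward h G t)"
  unfolding pushforward_def by (auto intro!: infsum_add summable_on_if_norm_summable)

lemma pushforward_scale:
  fixes F :: "'a \<Rightarrow> complex"
  shows "pushforward h (\<lambda>x. c * F x) = (\<lambda>t. c * pushforward h F t)"
  unfolding pushforward_def by (simp add: infsum_cmult_right')

section \<open>The monoid Cu_2 and the algebra \<open>Acal\<close>\<close>

text \<open>Cu_2 acts faithfully on words by partial maps: \<open>s\<^sub>i s\<^sub>j\<^sup>*\<close> sends \<open>j w\<close> to \<open>i w\<close> and
  is undefined elsewhere, while the zero element acts as the empty map. Associativity of
  \<open>cu_mult\<close> is inherited from composition of partial maps.\<close>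

definition cu_act :: "cu \<Rightarrow> word \<Rightarrow> word option" where
  "cu_act a w = (if \<exists>w'. w = snd a @ w' then Some (fst a @ drop (length (snd a)) w) else None)"

definition cu_act_opt :: "cu option \<Rightarrow> word \<Rightarrow> word option" where
  "cu_act_opt x = (case x of None \<Rightarrow> Map.empty | Some a \<Rightarrow> cu_act a)"

lemma cu_act_opt_simps [simp]:
  "cu_act_opt (Some a) = cu_act a"
  "cu_act_opt None = Map.empty"
  by (simp_all add: cu_act_opt_def)

lemma cu_act_cu_mult: "cu_act_opt (cu_mult a b) = cu_act a \<circ>\<^sub>m cu_act b"
proof
  fix w
  obtain i j k l where ab: "a = (i,j)" "b = (k,l)" by (cases a, cases b)
  consider k' where "k = j @ k'" | j' where "\<nexists>k'. k = j @ k'" "j = k @ j'"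
    | "\<nexists>k'. k = j @ k'" "\<nexists>j'. j = k @ j'" by blast
  then show "cu_act_opt (cu_mult a b) w = (cu_act a \<circ>\<^sub>m cu_act b) w"
  proof cases
    case 3
    then have "(cu_act a \<circ>\<^sub>m cu_act b) w = None"
      using ab by (auto simp: cu_act_def map_comp_def append_eq_append_conv2 split: option.splits)
    then show ?thesis using 3 ab by (auto simp: cu_mult_def)
  qed (use ab in \<open>auto simp: cu_mult_def cu_act_def map_comp_def split: option.splits\<close>)
qed

lemma cu_act_snd: "cu_act a (snd a) = Some (fst a)"
  by (simp add: cu_act_def)

lemma cu_act_inj: "cu_act a = cu_act b \<Longrightarrow> a = b"
proof -
  assume eq: "cu_act a = cu_act b"
  obtain i j k l where ab: "a = (i,j)" "b = (k,l)" by (cases a, cases b)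
  have i: "cu_act b j = Some i" and k: "cu_act a l = Some k"
    using eq cu_act_snd[of a] cu_act_snd[of b] ab by simp_all
  then obtain l' j' where "j = l @ l'" "l = j @ j'" using ab by (auto simp: cu_act_def split: if_splits)
  then have "j = l" by simp
  with i show "a = b" using ab by (simp add: cu_act_def)
qed

lemma cu_act_opt_inj: "cu_act_opt x = cu_act_opt y \<Longrightarrow> x = y"
proof (cases x; cases y)
  fix a assume "cu_act_opt x = cu_act_opt y" "x = None" "y = Some a"
  then show ?thesis using cu_act_snd[of a] by (auto dest!: fun_cong[where x="snd a"])
next
  fix a assume "cu_act_opt x = cu_act_opt y" "x = Some a" "y = None"
  then show ?thesis using cu_act_snd[of a] by (auto dest!: fun_cong[where x="snd a"])
next
  fix a b assume "cu_act_opt x = cu_act_opt y" "x = Some a" "y = Some b"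
  then show ?thesis using cu_act_inj by simp
qed simp

lemma cu_mult_assoc:
  "Option.bind (cu_mult a b) (\<lambda>s. cu_mult s c) = Option.bind (cu_mult b c) (cu_mult a)"
proof (rule cu_act_opt_inj)
  have "cu_act_opt (Option.bind x (\<lambda>s. cu_mult s c)) = cu_act_opt x \<circ>\<^sub>m cu_act c"
    and "cu_act_opt (Option.bind x (cu_mult a)) = cu_act a \<circ>\<^sub>m cu_act_opt x" for x
    by (cases x; simp add: cu_act_cu_mult map_comp_def)+
  then show "cu_act_opt (Option.bind (cu_mult a b) (\<lambda>s. cu_mult s c))
      = cu_act_opt (Option.bind (cu_mult b c) (cu_mult a))"
    by (simp add: cu_act_cu_mult map_comp_def fun_eq_iff split: option.splits)
qed

lemma cu_mult_unit [simp]: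
  "cu_mult ([],[]) q = Some q"
  "cu_mult q ([],[]) = Some q"
  by (cases q; simp add: cu_mult_def)+

definition tensor :: "('a \<Rightarrow> complex) \<Rightarrow> ('b \<Rightarrow> complex) \<Rightarrow> 'a \<times> 'b \<Rightarrow> complex" where
  "tensor f g p = f (fst p) * g (snd p)"

lemma Acal_iff_norm_summable: "f \<in> Acal \<longleftrightarrow> norm_summable f UNIV"
  by (simp add: Acal_def)

lemma conv_eq_pushforward: "conv f g = pushforward (case_prod cu_mult) (tensor f g)"
  unfolding conv_def pushforward_def fun_eq_iff
  by (intro allI infsum_cong_neutral) (auto simp: tensor_def case_prod_beta)

lemma
  assumes f: "norm_summable f UNIV" and g: "norm_summable g UNIV"
  shows norm_summable_tensor: "norm_summable (tensor f g) UNIV"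
    and infsum_norm_tensor: "infsum (\<lambda>p. norm (tensor f g p)) UNIV
      = infsum (\<lambda>x. norm (f x)) UNIV * infsum (\<lambda>x. norm (g x)) UNIV"
proof -
  have row: "infsum (\<lambda>y. norm (tensor f g (x, y))) UNIV = norm (f x) * infsum (\<lambda>y. norm (g y)) UNIV" for x
    by (simp add: tensor_def norm_mult infsum_cmult_right')
  have "\<forall>x\<in>UNIV. norm_summable (\<lambda>y. tensor f g (x, y)) UNIV"
    using summable_on_cmult_right[OF g] by (simp add: tensor_def norm_mult)
  moreover have "norm_summable (\<lambda>x. infsum (\<lambda>y. norm (tensor f g (x, y))) UNIV) UNIV"
    unfolding row using summable_on_cmult_left[OF f] by (simp add: abs_mult)
  ultimately show T: "norm_summable (tensor f g) UNIV"
    using Infinite_Sum.abs_summable_on_Sigma_iff[of "tensor f g" UNIV "\<lambda>_. UNIV"] by simp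
  have "infsum (\<lambda>p. norm (tensor f g p)) UNIV = infsum (\<lambda>x. infsum (\<lambda>y. norm (tensor f g (x, y))) UNIV) UNIV"
    using infsum_Sigma_banach[of "\<lambda>p. norm (tensor f g p)" UNIV "\<lambda>_. UNIV"] T by simp
  then show "infsum (\<lambda>p. norm (tensor f g p)) UNIV
      = infsum (\<lambda>x. norm (f x)) UNIV * infsum (\<lambda>x. norm (g x)) UNIV"
    unfolding row by (simp add: infsum_cmult_left')
qed

lemma conv_in_Acal: "f \<in> Acal \<Longrightarrow> g \<in> Acal \<Longrightarrow> conv f g \<in> Acal"
  unfolding conv_eq_pushforward Acal_iff_norm_summable
  by (intro norm_summable_pushforward norm_summable_tensor)

lemma l1norm_pushforward_le:
  "norm_summable F UNIV \<Longrightarrow> l1norm (pushforward h F) \<le> infsum (\<lambda>x. norm (F x)) UNIV"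
  using infsum_norm_pushforward_le[of F h UNIV]
    infsum_mono_neutral[of "\<lambda>x. norm (F x)" "h -` Some ` UNIV" "\<lambda>x. norm (F x)" UNIV]
    norm_summable_subset[of F]
  by (fastforce simp: l1norm_def)

lemma l1norm_conv_le: "f \<in> Acal \<Longrightarrow> g \<in> Acal \<Longrightarrow> l1norm (conv f g) \<le> l1norm f * l1norm g"
  unfolding conv_eq_pushforward Acal_iff_norm_summable
  using l1norm_pushforward_le norm_summable_tensor infsum_norm_tensor
  by (metis l1norm_def)

lemma infsum_delta: "infsum (delta q) A = (if q \<in> A then 1 else 0)"
proof -
  have "infsum (delta q) A = infsum (delta q) (A \<inter> {q})"
    by (rule infsum_cong_neutral) (auto simp: delta_def)
  then show ?thesis by (auto simp: delta_def)
qed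

lemma delta_in_Acal: "delta q \<in> Acal"
proof -
  have "norm_summable (delta q) UNIV \<longleftrightarrow> norm_summable (delta q) {q}"
    by (rule summable_on_cong_neutral) (auto simp: delta_def)
  then show ?thesis by (simp add: Acal_def)
qed

lemma delta_e_in_Acal: "delta_e \<in> Acal"
  by (simp add: delta_e_def delta_in_Acal)

lemma l1norm_delta_e: "l1norm delta_e = 1"
proof -
  have "infsum (\<lambda>x. norm (delta_e x)) UNIV = infsum (\<lambda>x. norm (delta_e x)) {([],[])}"
    by (rule infsum_cong_neutral) (auto simp: delta_e_def delta_def)
  then show ?thesis by (simp add: l1norm_def delta_e_def delta_def)
qed

lemma conv_delta_left: "conv (delta p) F = pushforward (cu_mult p) F"
proof
  fix t
  have "conv (delta p) F t = infsum (\<lambda>x. F (snd x)) (Pair p ` {q. cu_mult p q = Some t})"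
    unfolding conv_eq_pushforward pushforward_def
    by (rule infsum_cong_neutral) (auto simp: tensor_def delta_def)
  also have "\<dots> = pushforward (cu_mult p) F t"
    by (subst infsum_reindex) (auto simp: inj_on_def o_def pushforward_def)
  finally show "conv (delta p) F t = pushforward (cu_mult p) F t" .
qed

lemma conv_delta_right: "conv F (delta p) = pushforward (\<lambda>q. cu_mult q p) F"
proof
  fix t
  have "conv F (delta p) t = infsum (\<lambda>x. F (fst x)) ((\<lambda>q. (q,p)) ` {q. cu_mult q p = Some t})"
    unfolding conv_eq_pushforward pushforward_def
    by (rule infsum_cong_neutral) (auto simp: tensor_def delta_def)
  also have "\<dots> = pushforward (\<lambda>q. cu_mult q p) F t"
    by (subst infsum_reindex) (auto simp: inj_on_def o_def pushforward_def)
  finally show "conv F (delta p) t = pushforward (\<lambda>q. cu_mult q p) F t" .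
qed

lemma conv_delta_delta: "cu_mult p q = Some r \<Longrightarrow> conv (delta p) (delta q) = delta r"
  by (simp add: conv_delta_left pushforward_def infsum_delta fun_eq_iff) (auto simp: delta_def)

lemma conv_delta_e_left [simp]: "conv delta_e F = F"
  by (simp add: delta_e_def conv_delta_left pushforward_def fun_eq_iff)

lemma conv_delta_e_right [simp]: "conv F delta_e = F"
  by (simp add: delta_e_def conv_delta_right pushforward_def fun_eq_iff)

text \<open>Both sides of the associative law are pushforwards of the triple tensor product along
  the two bracketings of the product in Cu_2, which agree by \<open>cu_mult_assoc\<close>.\<close>

lemma tensor_pushforward_left:
  fixes h :: "'a \<Rightarrow> 'b option" and G :: "'c \<Rightarrow> complex"
  shows "tensor (pushforward h T) G = pushforward (\<lambda>(x,y). map_option (\<lambda>s. (s,y)) (h x)) (tensor T G)"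
proof
  fix p :: "'b \<times> 'c"
  obtain s c where p: "p = (s,c)" by (cases p)
  have "tensor (pushforward h T) G p = infsum (\<lambda>x. T x * G c) {x. h x = Some s}"
    by (simp add: p tensor_def pushforward_def infsum_cmult_left')
  also have "\<dots> = infsum (tensor T G) ((\<lambda>x. (x,c)) ` {x. h x = Some s})"
    by (subst infsum_reindex) (auto simp: inj_on_def o_def tensor_def)
  also have "(\<lambda>x. (x,c)) ` {x. h x = Some s} = {y. (\<lambda>(x,y). map_option (\<lambda>s. (s,y)) (h x)) y = Some p}"
    by (auto simp: p)
  also have "infsum (tensor T G) \<dots> = pushforward (\<lambda>(x,y). map_option (\<lambda>s. (s,y)) (h x)) (tensor T G) p"
    by (simp only: pushforward_def)
  finally show "tensor (pushforward h T) G p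
      = pushforward (\<lambda>(x,y). map_option (\<lambda>s. (s,y)) (h x)) (tensor T G) p" .
qed

lemma tensor_pushforward_right:
  fixes h :: "'a \<Rightarrow> 'b option" and F :: "'c \<Rightarrow> complex"
  shows "tensor F (pushforward h T) = pushforward (\<lambda>(x,y). map_option (\<lambda>s. (x,s)) (h y)) (tensor F T)"
proof
  fix p :: "'c \<times> 'b"
  obtain c s where p: "p = (c,s)" by (cases p)
  have "tensor F (pushforward h T) p = infsum (\<lambda>x. F c * T x) {x. h x = Some s}"
    by (simp add: p tensor_def pushforward_def infsum_cmult_right')
  also have "\<dots> = infsum (tensor F T) ((\<lambda>x. (c,x)) ` {x. h x = Some s})"
    by (subst infsum_reindex) (auto simp: inj_on_def o_def tensor_def)
  also have "(\<lambda>x. (c,x)) ` {x. h x = Some s} = {y. (\<lambda>(x,y). map_option (\<lambda>s. (x,s)) (h y)) y = Some p}"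
    by (auto simp: p)
  also have "infsum (tensor F T) \<dots> = pushforward (\<lambda>(x,y). map_option (\<lambda>s. (x,s)) (h y)) (tensor F T) p"
    by (simp only: pushforward_def)
  finally show "tensor F (pushforward h T) p
      = pushforward (\<lambda>(x,y). map_option (\<lambda>s. (x,s)) (h y)) (tensor F T) p" .
qed

lemma conv_assoc:
  assumes f: "f \<in> Acal" and g: "g \<in> Acal" and h: "h \<in> Acal"
  shows "conv (conv f g) h = conv f (conv g h)"
proof -
  note summable = norm_summable_tensor[unfolded Acal_iff_norm_summable[symmetric]]
  define \<sigma> :: "(cu \<times> cu) \<times> cu \<Rightarrow> cu \<times> cu \<times> cu" where "\<sigma> = (\<lambda>((a,b),c). (a,(b,c)))"
  have bij: "bij \<sigma>" unfolding \<sigma>_def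
    by (rule bij_betwI[where g = "\<lambda>(a,(b,c)). ((a,b),c)"]) auto
  let ?L = "\<lambda>((a,b),c). Option.bind (cu_mult a b) (\<lambda>s. cu_mult s c)"
  let ?R = "\<lambda>(a,b,c). Option.bind (cu_mult b c) (cu_mult a)"
  have "conv (conv f g) h = pushforward ?L (tensor (tensor f g) h)"
    using f g h by (simp add: conv_eq_pushforward tensor_pushforward_left pushforward_comp summable
        Acal_iff_norm_summable split_def bind_map_option o_def)
  also have "\<dots> = pushforward (?R \<circ> \<sigma>) (tensor f (tensor g h) \<circ> \<sigma>)"
    by (rule arg_cong2[where f=pushforward]) (auto simp: fun_eq_iff \<sigma>_def tensor_def cu_mult_assoc)
  also have "\<dots> = pushforward ?R (tensor f (tensor g h))"
    by (rule pushforward_bij[OF bij, symmetric])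
  also have "\<dots> = conv f (conv g h)"
    using f g h by (simp add: conv_eq_pushforward tensor_pushforward_right pushforward_comp summable
        Acal_iff_norm_summable split_def bind_map_option o_def)
  finally show ?thesis .
qed

lemma Acal_zero: "(\<lambda>_. 0) \<in> Acal"
  by (simp add: Acal_def)

lemma Acal_add: "f \<in> Acal \<Longrightarrow> g \<in> Acal \<Longrightarrow> (\<lambda>x. f x + g x) \<in> Acal"
proof -
  assume "f \<in> Acal" "g \<in> Acal"
  then have "(\<lambda>x. norm (f x) + norm (g x)) summable_on UNIV"
    by (auto simp: Acal_def intro: summable_on_add)
  then show ?thesis unfolding Acal_iff_norm_summable
    by (rule Infinite_Sum.abs_summable_on_comparison_test') (simp add: norm_triangle_ineq)
qed

lemma Acal_scale: "f \<in> Acal \<Longrightarrow> (\<lambda>x. c * f x) \<in> Acal"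
  unfolding Acal_def by (simp add: norm_mult summable_on_cmult_right)

lemma Acal_diff: "f \<in> Acal \<Longrightarrow> g \<in> Acal \<Longrightarrow> (\<lambda>x. f x - g x) \<in> Acal"
  using Acal_add[of f "\<lambda>x. (-1) * g x"] Acal_scale[of g "-1"] by simp

lemma summable_on_if_Acal: "f \<in> Acal \<Longrightarrow> f summable_on A"
  by (simp add: Acal_def summable_on_if_norm_summable)

lemma l1norm_nonneg: "0 \<le> l1norm f"
  by (simp add: l1norm_def infsum_nonneg)

lemma l1norm_scale: "l1norm (\<lambda>t. c * F t) = norm c * l1norm F"
  by (simp add: l1norm_def norm_mult infsum_cmult_right')

lemma norm_infsum_le_l1norm: "f \<in> Acal \<Longrightarrow> norm (infsum f A) \<le> l1norm f"
  unfolding Acal_iff_norm_summable l1norm_def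
  by (rule order_trans[OF norm_infsum_bound infsum_mono_neutral])
    (auto intro: norm_summable_subset)

lemma tensor_linear:
  "tensor (\<lambda>x. f x + g x) h = (\<lambda>p. tensor f h p + tensor g h p)"
  "tensor h (\<lambda>x. f x + g x) = (\<lambda>p. tensor h f p + tensor h g p)"
  "tensor (\<lambda>x. c * f x) h = (\<lambda>p. c * tensor f h p)"
  "tensor h (\<lambda>x. c * f x) = (\<lambda>p. c * tensor h f p)"
  by (simp_all add: tensor_def fun_eq_iff algebra_simps)

lemma conv_add_left:
  "f \<in> Acal \<Longrightarrow> g \<in> Acal \<Longrightarrow> h \<in> Acal \<Longrightarrow> conv (\<lambda>x. f x + g x) h = (\<lambda>t. conv f h t + conv g h t)"
  unfolding conv_eq_pushforward tensor_linear Acal_iff_norm_summable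
  by (intro pushforward_add norm_summable_tensor)

lemma conv_add_right:
  "f \<in> Acal \<Longrightarrow> g \<in> Acal \<Longrightarrow> h \<in> Acal \<Longrightarrow> conv h (\<lambda>x. f x + g x) = (\<lambda>t. conv h f t + conv h g t)"
  unfolding conv_eq_pushforward tensor_linear Acal_iff_norm_summable
  by (intro pushforward_add norm_summable_tensor)

lemma conv_scale_left: "conv (\<lambda>x. c * f x) h = (\<lambda>t. c * conv f h t)"
  unfolding conv_eq_pushforward tensor_linear by (rule pushforward_scale)

lemma conv_scale_right: "conv h (\<lambda>x. c * f x) = (\<lambda>t. c * conv h f t)"
  unfolding conv_eq_pushforward tensor_linear by (rule pushforward_scale)

lemma conv_diff_left:
  assumes "f \<in> Acal" "g \<in> Acal" "h \<in> Acal"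
  shows "conv (\<lambda>x. f x - g x) h = (\<lambda>t. conv f h t - conv g h t)"
  using conv_add_left[of f "\<lambda>x. (-1) * g x" h] conv_scale_left[of "-1" g h] assms Acal_scale[of g "-1"]
  by simp

lemma conv_diff_right:
  assumes "f \<in> Acal" "g \<in> Acal" "h \<in> Acal"
  shows "conv h (\<lambda>x. f x - g x) = (\<lambda>t. conv h f t - conv h g t)"
  using conv_add_right[of f "\<lambda>x. (-1) * g x" h] conv_scale_right[of h "-1" g] assms Acal_scale[of g "-1"]
  by simp

section \<open>Branches of Cu_2 and zero branch sums\<close>

definition has_parent :: "cu \<Rightarrow> bool" where
  "has_parent x \<longleftrightarrow> fst x \<noteq> [] \<and> snd x \<noteq> [] \<and> last (fst x) = last (snd x)"

definition parent :: "cu \<Rightarrow> cu" where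
  "parent x = (butlast (fst x), butlast (snd x))"

definition child :: "gen \<Rightarrow> cu \<Rightarrow> cu" where
  "child g p = (fst p @ [g], snd p @ [g])"

definition word_prefix :: "(nat \<Rightarrow> gen) \<Rightarrow> nat \<Rightarrow> word" where
  "word_prefix n l = map n [0..<l]"

definition branch_elem :: "cu \<Rightarrow> (nat \<Rightarrow> gen) \<Rightarrow> nat \<Rightarrow> cu" where
  "branch_elem v n l = (fst v @ word_prefix n l, snd v @ word_prefix n l)"

definition branch :: "cu \<Rightarrow> (nat \<Rightarrow> gen) \<Rightarrow> cu set" where
  "branch v n = range (branch_elem v n)"

definition scons :: "gen \<Rightarrow> (nat \<Rightarrow> gen) \<Rightarrow> nat \<Rightarrow> gen" where
  "scons g n k = (case k of 0 \<Rightarrow> g | Suc k' \<Rightarrow> n k')"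

definition zero_branch_sums :: "(cu \<Rightarrow> complex) \<Rightarrow> bool" where
  "zero_branch_sums f \<longleftrightarrow> f \<in> Acal \<and> (\<forall>v n. \<not> has_parent v \<longrightarrow> infsum f (branch v n) = 0)"

lemma has_parent_child [simp]: "has_parent (child g p)"
  and parent_child [simp]: "parent (child g p) = p"
  by (simp_all add: has_parent_def parent_def child_def)

lemma child_parent: "has_parent x \<Longrightarrow> child (last (fst x)) (parent x) = x"
  by (cases x) (auto simp: has_parent_def parent_def child_def, metis append_butlast_last_id)

lemma child_eq_iff: "x = child g y \<longleftrightarrow> has_parent x \<and> last (fst x) = g \<and> y = parent x"
proof
  assume "x = child g y"
  then show "has_parent x \<and> last (fst x) = g \<and> y = parent x"
    using has_parent_child[of g y] parent_child[of g y] by (simp add: child_def)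
next
  assume "has_parent x \<and> last (fst x) = g \<and> y = parent x"
  then show "x = child g y" using child_parent[of x] by simp
qed

lemma word_prefix_Suc: "word_prefix n (Suc l) = n 0 # word_prefix (\<lambda>k. n (Suc k)) l"
  by (simp add: word_prefix_def map_upt_Suc del: upt_Suc)

lemma word_prefix_scons [simp]: "word_prefix (scons g n) (Suc l) = g # word_prefix n l"
  by (simp add: word_prefix_Suc scons_def)

lemma word_prefix_0 [simp]: "word_prefix n 0 = []"
  by (simp add: word_prefix_def)

lemma length_word_prefix [simp]: "length (word_prefix n l) = l"
  by (simp add: word_prefix_def)

lemma word_prefix_eq_Nil_iff [simp]: "word_prefix n l = [] \<longleftrightarrow> l = 0"
  by (simp add: word_prefix_def)

lemma take_word_prefix: "t \<le> l \<Longrightarrow> take t (word_prefix n l) = word_prefix n t"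
  by (simp add: word_prefix_def take_map)

lemma inj_branch_elem: "inj (branch_elem v n)"
  by (auto simp: inj_on_def branch_elem_def dest: arg_cong[where f=length])

lemma mem_branch_iff: "x \<in> branch v n \<longleftrightarrow> (\<exists>l. x = (fst v @ word_prefix n l, snd v @ word_prefix n l))"
  by (auto simp: branch_def branch_elem_def)

lemma root_mem_branch: "v \<in> branch v n"
  unfolding mem_branch_iff by (rule exI[of _ 0]) simp

lemma branch_scons: "branch p (scons g n) = insert p (branch (child g p) n)"
proof (rule set_eqI)
  fix x
  show "x \<in> branch p (scons g n) \<longleftrightarrow> x \<in> insert p (branch (child g p) n)"
  proof
    assume "x \<in> branch p (scons g n)"
    then obtain l where l: "x = (fst p @ word_prefix (scons g n) l, snd p @ word_prefix (scons g n) l)"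
      by (auto simp: mem_branch_iff)
    then show "x \<in> insert p (branch (child g p) n)"
      by (cases l) (auto simp: mem_branch_iff child_def)
  next
    assume "x \<in> insert p (branch (child g p) n)"
    then consider "x = p" | l where "x = (fst p @ word_prefix (scons g n) (Suc l), snd p @ word_prefix (scons g n) (Suc l))"
      by (auto simp: mem_branch_iff child_def)
    then show "x \<in> branch p (scons g n)"
      by cases (simp add: root_mem_branch, unfold mem_branch_iff, blast)
  qed
qed

lemma without_symmetric_core_iff: "without_symmetric_core v \<longleftrightarrow> \<not> has_parent v"
proof
  assume core: "without_symmetric_core v"
  show "\<not> has_parent v"
  proof
    assume "has_parent v"
    then have "v = (fst (parent v) @ [last (fst v)], snd (parent v) @ [last (fst v)])"
      using child_parent[of v] by (simp add: child_def)
    with core show False by (auto simp: without_symmetric_core_def)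
  qed
next
  assume "\<not> has_parent v"
  then show "without_symmetric_core v"
    by (auto simp: without_symmetric_core_def has_parent_def) (metis last_appendR)
qed

lemma sums_branch:
  assumes "f \<in> Acal"
  shows "(\<lambda>l. f (branch_elem v n l)) sums infsum f (branch v n)"
proof -
  have "(f has_sum infsum f (branch v n)) (branch v n)"
    using summable_on_if_Acal[OF assms] by simp
  then have "((f \<circ> branch_elem v n) has_sum infsum f (branch v n)) UNIV"
    using has_sum_reindex[OF inj_branch_elem] unfolding branch_def by blast
  then show ?thesis by (simp add: has_sum_imp_sums o_def)
qed

lemma zero_branch_sums_iff:
  assumes "f \<in> Acal"
  shows "zero_branch_sums f \<longleftrightarrow> (\<forall>v. without_symmetric_core v \<longrightarrow> zero_sums_at f v)"
proof -
  have "zero_sums_at f v \<longleftrightarrow> (\<forall>n. infsum f (branch v n) = 0)" for v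
  proof -
    have "(\<lambda>l. f (fst v @ map n [0..<l], snd v @ map n [0..<l])) = (\<lambda>l. f (branch_elem v n l))" for n
      by (simp add: branch_elem_def word_prefix_def)
    then show ?thesis
      unfolding zero_sums_at_def using sums_branch[OF assms] sums_unique2 by metis
  qed
  then show ?thesis
    using assms by (auto simp: zero_branch_sums_def without_symmetric_core_iff)
qed

lemma zero_branch_sums_in_Acal: "zero_branch_sums f \<Longrightarrow> f \<in> Acal"
  by (simp add: zero_branch_sums_def)

lemma zero_branch_sums_infsum:
  "zero_branch_sums f \<Longrightarrow> \<not> has_parent v \<Longrightarrow> infsum f (branch v n) = 0"
  unfolding zero_branch_sums_def by blast

section \<open>Functions with zero branch sums form a closed ideal\<close>

text \<open>Multiplication by elements of Cu_2 maps root branches onto root branches (or kills them),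
  so the fibre decomposition of a pushforward shows that it preserves zero branch sums.\<close>

definition preserves_branches :: "(cu \<Rightarrow> cu option) \<Rightarrow> bool" where
  "preserves_branches h \<longleftrightarrow> (\<forall>v n. \<not> has_parent v \<longrightarrow> h -` Some ` branch v n = {}
     \<or> (\<exists>v' n'. \<not> has_parent v' \<and> h -` Some ` branch v n = branch v' n'))"

lemma zero_branch_sums_pushforward:
  assumes f: "zero_branch_sums f" and h: "preserves_branches h"
  shows "zero_branch_sums (pushforward h f)"
proof -
  have F: "norm_summable f UNIV" using f by (simp add: zero_branch_sums_def Acal_def)
  have "infsum (pushforward h f) (branch v n) = 0" if "\<not> has_parent v" for v n
    using h that f infsum_pushforward[OF F, of h "branch v n"]
    unfolding preserves_branches_def zero_branch_sums_def by (metis infsum_empty)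
  then show ?thesis
    using norm_summable_pushforward[OF F] by (simp add: zero_branch_sums_def Acal_def)
qed

lemma Cons_mem_branch_Cons_iff: "(g # i, j) \<in> branch (g # c, d) n \<longleftrightarrow> (i, j) \<in> branch (c, d) n"
  by (auto simp: mem_branch_iff)

lemma mem_branch_Cons: "x \<in> branch (g # c, d) n \<Longrightarrow> \<exists>i. x = (g # i, snd x)"
  by (auto simp: mem_branch_iff)

lemma Nil_mem_branch_iff: "([], j) \<in> branch (c, d) n \<longleftrightarrow> c = [] \<and> j = d"
  by (auto simp: mem_branch_iff intro: exI[of _ 0])

lemma Cons_mem_branch_Nil_iff:
  "(g # i, j) \<in> branch ([], d) n \<longleftrightarrow> n 0 = g \<and> (i, j) \<in> branch ([], d @ [g]) (\<lambda>k. n (Suc k))"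
proof
  assume "(g # i, j) \<in> branch ([], d) n"
  then obtain l where l: "g # i = word_prefix n l" "j = d @ word_prefix n l"
    by (auto simp: mem_branch_iff)
  then obtain l' where "l = Suc l'" by (cases l) auto
  with l show "n 0 = g \<and> (i, j) \<in> branch ([], d @ [g]) (\<lambda>k. n (Suc k))"
    by (auto simp: mem_branch_iff word_prefix_Suc)
next
  assume "n 0 = g \<and> (i, j) \<in> branch ([], d @ [g]) (\<lambda>k. n (Suc k))"
  then obtain l where "n 0 = g" "i = word_prefix (\<lambda>k. n (Suc k)) l" "j = d @ g # word_prefix (\<lambda>k. n (Suc k)) l"
    by (auto simp: mem_branch_iff)
  then have "(g # i, j) = branch_elem ([], d) n (Suc l)"
    by (simp add: branch_elem_def word_prefix_Suc)
  then show "(g # i, j) \<in> branch ([], d) n"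
    by (simp add: branch_def)
qed

lemma cu_mult_gen: "cu_mult ([g],[]) x = Some (g # fst x, snd x)"
  by (cases x) (simp add: cu_mult_def)

lemma vimage_branch_mult_gen:
  "cu_mult ([g],[]) -` Some ` branch (c,d) n = (case c of
      [] \<Rightarrow> if n 0 = g then branch ([], d @ [g]) (\<lambda>k. n (Suc k)) else {}
    | g' # c' \<Rightarrow> if g' = g then branch (c', d) n else {})"
  by (cases c) (auto simp: cu_mult_gen Cons_mem_branch_Nil_iff Cons_mem_branch_Cons_iff dest: mem_branch_Cons)

lemma preserves_branches_mult_gen: "preserves_branches (cu_mult ([g],[]))"
  unfolding preserves_branches_def
proof (intro allI impI)
  fix v n assume root: "\<not> has_parent v"
  obtain c d where v: "v = (c,d)" by (cases v)
  show "cu_mult ([g],[]) -` Some ` branch v n = {} \<or> (\<exists>v' n'. \<not> has_parent v'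
      \<and> cu_mult ([g],[]) -` Some ` branch v n = branch v' n')"
  proof (cases c)
    case (Cons g' c')
    have "\<not> has_parent (c', d)" using root by (auto simp: v Cons has_parent_def)
    then show ?thesis by (auto simp: v Cons vimage_branch_mult_gen)
  qed (auto simp: v vimage_branch_mult_gen has_parent_def)
qed

lemma cu_mult_adj_gen:
  "cu_mult ([],[g]) (i,j) = (case i of [] \<Rightarrow> Some ([], j @ [g]) | g' # i' \<Rightarrow> if g' = g then Some (i', j) else None)"
  by (cases i) (auto simp: cu_mult_def)

lemma vimage_branch_mult_adj_gen:
  "cu_mult ([],[g]) -` Some ` branch (c,d) n = (if c = [] \<and> d \<noteq> [] \<and> last d = g
     then branch ([], butlast d) (scons g n) else branch (g # c, d) n)"
proof (rule set_eqI)
  fix x :: cu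
  obtain i j where x: "x = (i,j)" by (cases x)
  have "x \<in> cu_mult ([],[g]) -` Some ` branch (c,d) n \<longleftrightarrow>
      (i = [] \<and> c = [] \<and> j @ [g] = d) \<or> x \<in> branch (g # c, d) n"
    by (cases i) (auto simp: x cu_mult_adj_gen Nil_mem_branch_iff Cons_mem_branch_Cons_iff
        dest: mem_branch_Cons)
  also have "\<dots> \<longleftrightarrow> x \<in> (if c = [] \<and> d \<noteq> [] \<and> last d = g
      then branch ([], butlast d) (scons g n) else branch (g # c, d) n)"
  proof -
    have "j @ [g] = d \<longleftrightarrow> d \<noteq> [] \<and> last d = g \<and> j = butlast d"
      by (metis butlast_snoc last_snoc snoc_eq_iff_butlast)
    then show ?thesis
      using append_butlast_last_id[of d] by (auto simp: branch_scons child_def x)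
  qed
  finally show "x \<in> cu_mult ([],[g]) -` Some ` branch (c,d) n \<longleftrightarrow> \<dots>" .
qed

lemma preserves_branches_mult_adj_gen: "preserves_branches (cu_mult ([],[g]))"
  unfolding preserves_branches_def
proof (intro allI impI)
  fix v n assume root: "\<not> has_parent v"
  obtain c d where v: "v = (c,d)" by (cases v)
  show "cu_mult ([],[g]) -` Some ` branch v n = {} \<or> (\<exists>v' n'. \<not> has_parent v'
      \<and> cu_mult ([],[g]) -` Some ` branch v n = branch v' n')"
  proof (cases "c = [] \<and> d \<noteq> [] \<and> last d = g")
    case True
    then have "cu_mult ([],[g]) -` Some ` branch v n = branch ([], butlast d) (scons g n)"
      by (simp add: v vimage_branch_mult_adj_gen)
    moreover have "\<not> has_parent ([], butlast d)" by (simp add: has_parent_def)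
    ultimately show ?thesis by blast
  next
    case False
    then have "cu_mult ([],[g]) -` Some ` branch v n = branch (g # c, d) n"
      unfolding v vimage_branch_mult_adj_gen by (simp only: if_False)
    moreover have "\<not> has_parent (g # c, d)"
      using root False by (cases c) (auto simp: v has_parent_def)
    ultimately show ?thesis by blast
  qed
qed

text \<open>The involution of Cu_2 swaps the two words; it reverses products, so right
  multiplications are conjugates of left multiplications.\<close>

definition conj_partial :: "(cu \<Rightarrow> cu option) \<Rightarrow> cu \<Rightarrow> cu option" where
  "conj_partial h x = map_option prod.swap (h (prod.swap x))"

lemma cu_mult_swap: "cu_mult q a = map_option prod.swap (cu_mult (prod.swap a) (prod.swap q))"
  by (cases q; cases a) (auto simp: cu_mult_def)

lemma preserves_branches_conj_partial:
  assumes "preserves_branches h"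
  shows "preserves_branches (conj_partial h)"
  unfolding preserves_branches_def
proof (intro allI impI)
  fix v n assume root: "\<not> has_parent v"
  have swap_branch: "prod.swap ` branch w m = branch (prod.swap w) m" for w m
    by (auto simp: branch_def branch_elem_def image_iff)
  have has_parent_swap: "has_parent (prod.swap w) \<longleftrightarrow> has_parent w" for w
    by (auto simp: has_parent_def)
  have vimage: "conj_partial h -` Some ` branch v n = prod.swap ` (h -` Some ` branch (prod.swap v) n)"
    by (auto simp: conj_partial_def image_iff swap_branch[symmetric]) force+
  show "conj_partial h -` Some ` branch v n = {} \<or> (\<exists>v' n'. \<not> has_parent v'
      \<and> conj_partial h -` Some ` branch v n = branch v' n')"
    using assms root unfolding preserves_branches_def vimage
    by (metis has_parent_swap image_empty swap_branch)
qed

lemma preserves_branches_mult_right: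
  "preserves_branches (\<lambda>q. cu_mult q ([g],[]))" "preserves_branches (\<lambda>q. cu_mult q ([],[g]))"
proof -
  have "(\<lambda>q. cu_mult q a) = conj_partial (cu_mult (prod.swap a))" for a
    by (simp add: fun_eq_iff conj_partial_def cu_mult_swap[of _ a])
  then show "preserves_branches (\<lambda>q. cu_mult q ([g],[]))" "preserves_branches (\<lambda>q. cu_mult q ([],[g]))"
    by (simp_all add: preserves_branches_conj_partial preserves_branches_mult_gen
        preserves_branches_mult_adj_gen)
qed

lemma delta_split: "delta (a,b) = conv (delta (a,[])) (delta ([],b))"
  and delta_Cons_Nil: "delta (g # a, []) = conv (delta ([g],[])) (delta (a,[]))"
  and delta_Nil_snoc: "delta ([], b @ [g]) = conv (delta ([],[g])) (delta ([],b))"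
  by (simp_all add: conv_delta_delta cu_mult_def)

lemma zero_branch_sums_conv_delta_left:
  assumes f: "zero_branch_sums f"
  shows "zero_branch_sums (conv (delta p) f)"
proof -
  note assoc = conv_assoc[OF delta_in_Acal delta_in_Acal zero_branch_sums_in_Acal]
  have gen: "zero_branch_sums (conv (delta ([g],[])) F)" "zero_branch_sums (conv (delta ([],[g])) F)"
    if "zero_branch_sums F" for g F
    using that by (simp_all add: conv_delta_left zero_branch_sums_pushforward
        preserves_branches_mult_gen preserves_branches_mult_adj_gen)
  have isometries: "zero_branch_sums (conv (delta (a,[])) F)" if "zero_branch_sums F" for a F
    using that
  proof (induction a arbitrary: F)
    case (Cons g a)
    then show ?case by (subst delta_Cons_Nil) (simp add: assoc gen)
  qed (simp add: delta_e_def[symmetric])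
  have coisometries: "zero_branch_sums (conv (delta ([],b)) F)" if "zero_branch_sums F" for b F
    using that
  proof (induction b arbitrary: F rule: rev_induct)
    case (snoc g b)
    then show ?case by (subst delta_Nil_snoc) (simp add: assoc gen)
  qed (simp add: delta_e_def[symmetric])
  obtain a b where p: "p = (a,b)" by (cases p)
  show ?thesis
    unfolding p by (subst delta_split) (simp add: f assoc isometries coisometries)
qed

lemma zero_branch_sums_conv_delta_right:
  assumes f: "zero_branch_sums f"
  shows "zero_branch_sums (conv f (delta p))"
proof -
  note assoc = conv_assoc[OF zero_branch_sums_in_Acal delta_in_Acal delta_in_Acal, symmetric]
  have gen: "zero_branch_sums (conv F (delta ([g],[])))" "zero_branch_sums (conv F (delta ([],[g])))"
    if "zero_branch_sums F" for g F
    using that by (simp_all add: conv_delta_right zero_branch_sums_pushforward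
        preserves_branches_mult_right)
  have isometries: "zero_branch_sums (conv F (delta (a,[])))" if "zero_branch_sums F" for a F
    using that
  proof (induction a arbitrary: F)
    case (Cons g a)
    then show ?case by (subst delta_Cons_Nil) (simp add: assoc gen)
  qed (simp add: delta_e_def[symmetric])
  have coisometries: "zero_branch_sums (conv F (delta ([],b)))" if "zero_branch_sums F" for b F
    using that
  proof (induction b arbitrary: F rule: rev_induct)
    case (snoc g b)
    then show ?case by (subst delta_Nil_snoc) (simp add: assoc gen)
  qed (simp add: delta_e_def[symmetric])
  obtain a b where p: "p = (a,b)" by (cases p)
  show ?thesis
    unfolding p by (subst delta_split) (simp add: f assoc isometries coisometries)
qed

text \<open>Summing \<open>conv g f\<close> over a branch, Fubini splits the sum into the contributions
  \<open>g p\<close> times the branch sums of \<open>\<delta>\<^sub>p # f\<close>, all of which vanish.\<close>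

lemma zero_branch_sums_conv_left:
  assumes f: "zero_branch_sums f" and g: "g \<in> Acal"
  shows "zero_branch_sums (conv g f)"
proof -
  have fA: "f \<in> Acal" using f by (rule zero_branch_sums_in_Acal)
  have T: "norm_summable (tensor g f) UNIV"
    using g fA by (simp add: Acal_iff_norm_summable norm_summable_tensor)
  have "infsum (conv g f) (branch v n) = 0" if root: "\<not> has_parent v" for v n
  proof -
    let ?B = "branch v n"
    have "infsum (conv g f) ?B = infsum (tensor g f) (Sigma UNIV (\<lambda>p. cu_mult p -` Some ` ?B))"
      unfolding conv_eq_pushforward infsum_pushforward[OF T]
      by (rule arg_cong[where f="infsum _"]) auto
    also have "\<dots> = infsum (\<lambda>p. infsum (\<lambda>q. tensor g f (p,q)) (cu_mult p -` Some ` ?B)) UNIV"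
      by (rule infsum_Sigma_banach[symmetric]) (rule summable_on_if_norm_summable[OF T])
    also have "\<dots> = infsum (\<lambda>p. g p * infsum (conv (delta p) f) ?B) UNIV"
      using fA by (simp add: tensor_def infsum_cmult_right' conv_delta_left infsum_pushforward
          Acal_iff_norm_summable)
    also have "\<dots> = 0"
      by (simp add: zero_branch_sums_infsum[OF zero_branch_sums_conv_delta_left[OF f] root])
    finally show ?thesis .
  qed
  then show ?thesis using conv_in_Acal[OF g fA] by (simp add: zero_branch_sums_def)
qed

lemma zero_branch_sums_conv_right:
  assumes f: "zero_branch_sums f" and g: "g \<in> Acal"
  shows "zero_branch_sums (conv f g)"
proof -
  have fA: "f \<in> Acal" using f by (rule zero_branch_sums_in_Acal)
  have T: "norm_summable (tensor f g) UNIV"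
    using g fA by (simp add: Acal_iff_norm_summable norm_summable_tensor)
  have T': "norm_summable (tensor f g \<circ> prod.swap) UNIV"
    using T summable_on_reindex[OF inj_swap, of "\<lambda>x. norm (tensor f g x)" UNIV] by (simp add: o_def)
  have "infsum (conv f g) (branch v n) = 0" if root: "\<not> has_parent v" for v n
  proof -
    let ?B = "branch v n"
    let ?S = "Sigma UNIV (\<lambda>q. (\<lambda>p. cu_mult p q) -` Some ` ?B)"
    have "infsum (conv f g) ?B = infsum (tensor f g) (prod.swap ` ?S)"
      unfolding conv_eq_pushforward infsum_pushforward[OF T]
      by (rule arg_cong[where f="infsum _"]) (auto simp: image_iff)
    also have "\<dots> = infsum (tensor f g \<circ> prod.swap) ?S"
      by (rule infsum_reindex) simp
    also have "\<dots> = infsum (\<lambda>q. infsum (\<lambda>p. (tensor f g \<circ> prod.swap) (q,p)) ((\<lambda>p. cu_mult p q) -` Some ` ?B)) UNIV"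
      by (rule infsum_Sigma_banach[symmetric]) (rule summable_on_if_norm_summable[OF T'])
    also have "\<dots> = infsum (\<lambda>q. g q * infsum (conv f (delta q)) ?B) UNIV"
      using fA by (simp add: tensor_def infsum_cmult_left' conv_delta_right infsum_pushforward
          Acal_iff_norm_summable mult.commute)
    also have "\<dots> = 0"
      by (simp add: zero_branch_sums_infsum[OF zero_branch_sums_conv_delta_right[OF f] root])
    finally show ?thesis .
  qed
  then show ?thesis using conv_in_Acal[OF fA g] by (simp add: zero_branch_sums_def)
qed

lemma zero_branch_sums_ideal: "two_sided_ideal (Collect zero_branch_sums)"
proof -
  have "zero_branch_sums (\<lambda>t. f t + g t)" if "zero_branch_sums f" "zero_branch_sums g" for f g
    using that by (auto simp: zero_branch_sums_def Acal_add infsum_add summable_on_if_Acal)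
  moreover have "zero_branch_sums (\<lambda>t. c * f t)" if "zero_branch_sums f" for c f
    using that by (auto simp: zero_branch_sums_def Acal_scale infsum_cmult_right')
  moreover have "zero_branch_sums (\<lambda>_. 0)"
    by (simp add: zero_branch_sums_def Acal_zero)
  ultimately show ?thesis
    unfolding two_sided_ideal_def
    by (auto intro: zero_branch_sums_in_Acal zero_branch_sums_conv_left zero_branch_sums_conv_right)
qed

lemma zero_branch_sums_closed: "l1_closed (Collect zero_branch_sums)"
  unfolding l1_closed_def
proof (intro allI impI)
  fix u f assume a: "(\<forall>k. u k \<in> Collect zero_branch_sums) \<and> f \<in> Acal
    \<and> (\<lambda>k. l1norm (\<lambda>t. u k t - f t)) \<longlonglongrightarrow> 0"
  have uA: "u k \<in> Acal" for k using a by (simp add: zero_branch_sums_def)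
  have "infsum f (branch v n) = 0" if root: "\<not> has_parent v" for v n
  proof -
    have "norm (infsum f (branch v n)) \<le> l1norm (\<lambda>t. u k t - f t)" for k
    proof -
      have "infsum (\<lambda>t. u k t - f t) (branch v n) = infsum (u k) (branch v n) - infsum f (branch v n)"
        using uA a by (intro infsum_diff summable_on_if_Acal) auto
      also have "infsum (u k) (branch v n) = 0"
        using a root by (simp add: zero_branch_sums_infsum)
      moreover have "(\<lambda>t. u k t - f t) \<in> Acal" using uA a by (simp add: Acal_diff)
      ultimately show ?thesis
        using norm_infsum_le_l1norm[of "\<lambda>t. u k t - f t" "branch v n"] by simp
    qed
    then have "norm (infsum f (branch v n)) \<le> 0"
      using a by (intro LIMSEQ_le_const[of "\<lambda>k. l1norm (\<lambda>t. u k t - f t)"]) auto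
    then show ?thesis by simp
  qed
  then show "f \<in> Collect zero_branch_sums" using a by (simp add: zero_branch_sums_def)
qed

lemma unit_mem_branch_iff: "([],[]) \<in> branch v n \<longleftrightarrow> v = ([],[])"
  by (cases v) (auto simp: mem_branch_iff intro: exI[of _ 0])

lemma gen_mem_root_branch_iff:
  assumes "\<not> has_parent v"
  shows "([g],[g]) \<in> branch v n \<longleftrightarrow> v = ([],[]) \<and> n 0 = g"
proof
  assume "([g],[g]) \<in> branch v n"
  then obtain l where l: "[g] = fst v @ word_prefix n l" "[g] = snd v @ word_prefix n l"
    by (auto simp: mem_branch_iff)
  show "v = ([],[]) \<and> n 0 = g"
  proof (cases l)
    case 0
    then show ?thesis using l assms by (cases v) (auto simp: has_parent_def)
  next
    case (Suc l')
    then have "fst v = []" "snd v = []" "l' = 0"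
      using arg_cong[OF l(1), of length] arg_cong[OF l(2), of length] by auto
    then show ?thesis using l Suc by (cases v) (auto simp: word_prefix_Suc)
  qed
next
  assume "v = ([],[]) \<and> n 0 = g"
  then have "([g],[g]) = branch_elem v n 1" by (auto simp: branch_elem_def word_prefix_Suc)
  then show "([g],[g]) \<in> branch v n" by (simp add: branch_def)
qed

lemma zero_branch_sums_f0: "zero_branch_sums f0"
proof -
  have "infsum f0 (branch v n) = 0" if root: "\<not> has_parent v" for v n
  proof -
    have "infsum f0 (branch v n) = infsum (delta ([],[])) (branch v n)
        - infsum (delta ([G1],[G1])) (branch v n) - infsum (delta ([G2],[G2])) (branch v n)"
      unfolding f0_def
      by (subst infsum_diff, auto intro!: summable_on_if_Acal Acal_diff delta_in_Acal,
          subst infsum_diff, auto intro!: summable_on_if_Acal delta_in_Acal)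
    also have "\<dots> = 0"
      unfolding infsum_delta using unit_mem_branch_iff gen_mem_root_branch_iff[OF root]
      by (cases "n 0") auto
    finally show ?thesis .
  qed
  then show ?thesis
    by (simp add: zero_branch_sums_def f0_def Acal_diff delta_in_Acal)
qed

lemma not_zero_branch_sums_delta_e: "\<not> zero_branch_sums delta_e"
proof
  assume "zero_branch_sums delta_e"
  then have "infsum delta_e (branch ([],[]) (\<lambda>_. G1)) = 0"
    by (rule zero_branch_sums_infsum) (simp add: has_parent_def)
  then show False by (simp add: delta_e_def infsum_delta root_mem_branch)
qed

section \<open>Elements with zero branch sums lie in every closed ideal containing \<open>f0\<close>\<close>

lemma
  assumes "two_sided_ideal I"
  shows two_sided_ideal_subset: "I \<subseteq> Acal"
    and two_sided_ideal_zero: "(\<lambda>_. 0) \<in> I"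
    and two_sided_ideal_add: "f \<in> I \<Longrightarrow> g \<in> I \<Longrightarrow> (\<lambda>t. f t + g t) \<in> I"
    and two_sided_ideal_scale: "f \<in> I \<Longrightarrow> (\<lambda>t. c * f t) \<in> I"
    and two_sided_ideal_conv_left: "g \<in> Acal \<Longrightarrow> f \<in> I \<Longrightarrow> conv g f \<in> I"
    and two_sided_ideal_conv_right: "g \<in> Acal \<Longrightarrow> f \<in> I \<Longrightarrow> conv f g \<in> I"
  using assms unfolding two_sided_ideal_def by blast+

lemma two_sided_ideal_sum:
  assumes I: "two_sided_ideal I" and S: "finite S" and u: "\<And>y. y \<in> S \<Longrightarrow> u y \<in> I"
  shows "(\<lambda>t. \<Sum>y\<in>S. c y * u y t) \<in> I"
  using S u
proof (induction S rule: finite_induct)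
  case empty
  then show ?case using two_sided_ideal_zero[OF I] by simp
next
  case (insert y S)
  then show ?case
    using two_sided_ideal_add[OF I two_sided_ideal_scale[OF I, of "u y" "c y"]] by simp
qed

definition f0_at :: "cu \<Rightarrow> cu \<Rightarrow> complex" where
  "f0_at y = (\<lambda>t. delta y t - delta (child G1 y) t - delta (child G2 y) t)"

lemma f0_at_eq_conv: "f0_at (a,b) = conv (conv (delta (a,[])) f0) (delta ([],b))"
proof -
  have left: "conv (delta (a,[])) (delta (i,j)) = delta (a @ i, j)" for i j
    by (simp add: conv_delta_delta cu_mult_def)
  have right: "conv (delta (i,j)) (delta ([],b)) = delta (i, b @ j)" for i j
    by (cases j) (simp_all add: conv_delta_delta cu_mult_def)
  show ?thesis
    by (simp add: f0_at_def f0_def child_def conv_diff_left conv_diff_right Acal_diff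
        delta_in_Acal left right)
qed

lemma f0_at_in_ideal:
  assumes I: "two_sided_ideal I" and "f0 \<in> I"
  shows "f0_at y \<in> I"
  using two_sided_ideal_conv_right[OF I delta_in_Acal two_sided_ideal_conv_left[OF I delta_in_Acal]]
    assms(2) by (cases y) (simp add: f0_at_eq_conv)

definition short_elems :: "nat \<Rightarrow> cu set" where
  "short_elems N = {x. length (fst x) + length (snd x) < N}"

lemma finite_short_elems: "finite (short_elems N)"
proof -
  have "(UNIV :: gen set) = {G1, G2}"
    using gen.exhaust by auto
  then have "finite {xs :: word. set xs \<subseteq> UNIV \<and> length xs \<le> N}"
    by (intro finite_lists_length_le) (metis finite.emptyI finite_insert)
  moreover have "short_elems N \<subseteq> {xs. set xs \<subseteq> UNIV \<and> length xs \<le> N} \<times> {xs. set xs \<subseteq> UNIV \<and> length xs \<le> N}"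
    by (auto simp: short_elems_def)
  ultimately show ?thesis using finite_subset by blast
qed

lemma parent_short: "has_parent x \<Longrightarrow> x \<in> short_elems N \<Longrightarrow> parent x \<in> short_elems N"
  by (auto simp: short_elems_def parent_def has_parent_def)

lemma tendsto_infsum_norm_not_short:
  assumes f: "norm_summable (f :: cu \<Rightarrow> complex) UNIV"
  shows "(\<lambda>N. infsum (\<lambda>x. norm (f x)) (- short_elems N)) \<longlonglongrightarrow> 0"
proof (rule LIMSEQ_I)
  fix r :: real assume r: "r > 0"
  obtain F where F: "finite F" "dist (sum (\<lambda>x. norm (f x)) F) (infsum (\<lambda>x. norm (f x)) UNIV) \<le> r/2"
    using infsum_finite_approximation[OF f, of "r/2"] r by auto
  obtain M where M: "\<forall>k\<in>(\<lambda>x. length (fst x) + length (snd x)) ` F. k \<le> M"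
    using F(1) finite_nat_set_iff_bounded_le by blast
  have "norm (infsum (\<lambda>x. norm (f x)) (- short_elems N)) < r" if N: "Suc M \<le> N" for N
  proof -
    have "F \<subseteq> short_elems N" using M N by (force simp: short_elems_def)
    then have "infsum (\<lambda>x. norm (f x)) (- short_elems N) \<le> infsum (\<lambda>x. norm (f x)) (- F)"
      by (intro infsum_mono_neutral) (use f norm_summable_subset in auto)
    also have "\<dots> \<le> r/2"
      using F(2) infsum_norm_Compl[OF f F(1)] unfolding dist_real_def by linarith
    finally show ?thesis
      using r infsum_nonneg[of "- short_elems N" "\<lambda>x. norm (f x)"] by simp
  qed
  then show "\<exists>N0. \<forall>N\<ge>N0. norm (infsum (\<lambda>x. norm (f x)) (- short_elems N) - 0) < r"
    by auto
qed

function ancestor_sum :: "(cu \<Rightarrow> complex) \<Rightarrow> cu \<Rightarrow> complex" where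
  "ancestor_sum f x = f x + (if has_parent x then ancestor_sum f (parent x) else 0)"
  by auto
termination
  by (relation "Wellfounded.measure (\<lambda>(f,x). length (fst x))") (auto simp: has_parent_def parent_def)

declare ancestor_sum.simps [simp del]

text \<open>An ancestor sum together with the sum along any branch below it is the sum along a
  root branch, hence zero.\<close>

lemma ancestor_sum_eq_branch:
  assumes f: "zero_branch_sums f"
  shows "ancestor_sum f x = - infsum f (branch (child g x) n)"
proof (induction "length (fst x)" arbitrary: x g n rule: less_induct)
  case less
  have "x \<notin> branch (child g x) n"
    by (auto simp: mem_branch_iff child_def dest: arg_cong[where f="\<lambda>x. length (fst x)"])
  then have split: "infsum f (branch x (scons g n)) = f x + infsum f (branch (child g x) n)"
    unfolding branch_scons
    by (intro infsum_insert summable_on_if_Acal zero_branch_sums_in_Acal[OF f])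
  show ?case
  proof (cases "has_parent x")
    case False
    then show ?thesis
      using split zero_branch_sums_infsum[OF f False] by (simp add: ancestor_sum.simps eq_neg_iff_add_eq_0)
  next
    case True
    then have "length (fst (parent x)) < length (fst x)"
      by (simp add: parent_def has_parent_def)
    then have "ancestor_sum f (parent x)
        = - infsum f (branch (child (last (fst x)) (parent x)) (scons g n))"
      by (rule less)
    then have "ancestor_sum f (parent x) = - infsum f (branch x (scons g n))"
      by (simp add: child_parent[OF True])
    then show ?thesis
      using True split by (simp add: ancestor_sum.simps[of f x])
  qed
qed

text \<open>Since \<open>f0_at y\<close> is \<open>\<delta>\<^sub>y\<close> minus the deltas at the two children of \<open>y\<close>,
  weighting it with ancestor sums telescopes: the approximant agrees with \<open>f\<close> on short
  elements, and just beyond them it equals minus an ancestor sum, i.e. a tail branch sum.\<close>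

definition approximant :: "(cu \<Rightarrow> complex) \<Rightarrow> nat \<Rightarrow> cu \<Rightarrow> complex" where
  "approximant f N = (\<lambda>t. \<Sum>y\<in>short_elems N. ancestor_sum f y * f0_at y t)"

lemma approximant_in_ideal:
  assumes "two_sided_ideal I" "f0 \<in> I"
  shows "approximant f N \<in> I"
  unfolding approximant_def
  by (rule two_sided_ideal_sum[OF assms(1) finite_short_elems f0_at_in_ideal[OF assms]])

lemma approximant_eq:
  "approximant f N x = (if x \<in> short_elems N then ancestor_sum f x else 0)
    - (if has_parent x \<and> parent x \<in> short_elems N then ancestor_sum f (parent x) else 0)"
proof -
  let ?S = "short_elems N" and ?c = "ancestor_sum f"
  have child: "(\<Sum>y\<in>?S. ?c y * delta (child g y) x)
      = (if has_parent x \<and> last (fst x) = g \<and> parent x \<in> ?S then ?c (parent x) else 0)" for g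
  proof -
    have "(\<Sum>y\<in>?S. ?c y * delta (child g y) x)
        = (\<Sum>y\<in>?S. if y = parent x then (if has_parent x \<and> last (fst x) = g then ?c y else 0) else 0)"
      by (rule sum.cong) (auto simp: delta_def child_eq_iff)
    then show ?thesis by (simp add: sum.delta[OF finite_short_elems])
  qed
  have self: "(\<Sum>y\<in>?S. ?c y * delta y x) = (if x \<in> ?S then ?c x else 0)"
    by (simp add: delta_def sum.delta'[OF finite_short_elems] if_distrib cong: if_cong)
  have "approximant f N x = (\<Sum>y\<in>?S. ?c y * delta y x)
      - (\<Sum>y\<in>?S. ?c y * delta (child G1 y) x) - (\<Sum>y\<in>?S. ?c y * delta (child G2 y) x)"
    by (simp add: approximant_def f0_at_def algebra_simps sum_subtractf sum.distrib)
  also have "\<dots> = (if x \<in> ?S then ?c x else 0)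
      - (if has_parent x \<and> parent x \<in> ?S then ?c (parent x) else 0)"
    unfolding self child by (cases "last (fst x)") auto
  finally show ?thesis .
qed

definition frontier_elems :: "nat \<Rightarrow> cu set" where
  "frontier_elems N = {x. x \<notin> short_elems N \<and> has_parent x \<and> parent x \<in> short_elems N}"

definition ray :: "cu \<Rightarrow> cu set" where
  "ray x = branch (child G1 x) (\<lambda>_. G1)"

lemma norm_approximant_diff_le:
  assumes f: "zero_branch_sums f"
  shows "norm (approximant f N x - f x) \<le> (if x \<in> short_elems N then 0 else norm (f x))
    + (if x \<in> frontier_elems N then infsum (\<lambda>y. norm (f y)) (ray x) else 0)"
proof (cases "x \<in> short_elems N")
  case True
  then show ?thesis
    using parent_short[of x N] by (simp add: approximant_eq ancestor_sum.simps[of f x] frontier_elems_def)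
next
  case not_short: False
  show ?thesis
  proof (cases "x \<in> frontier_elems N")
    case True
    then have "approximant f N x - f x = - ancestor_sum f x"
      using not_short by (simp add: approximant_eq frontier_elems_def ancestor_sum.simps[of f x])
    also have "\<dots> = infsum f (ray x)"
      using ancestor_sum_eq_branch[OF f, of x G1 "\<lambda>_. G1"] by (simp add: ray_def)
    also have "norm \<dots> \<le> infsum (\<lambda>y. norm (f y)) (ray x)"
      using f by (intro norm_infsum_bound) (simp add: norm_summable_subset zero_branch_sums_def Acal_def)
    finally show ?thesis
      using not_short True by (simp add: add_increasing)
  next
    case False
    then show ?thesis using not_short by (auto simp: approximant_eq frontier_elems_def)
  qed
qed

lemma mem_ray_iff: "y \<in> ray x \<longleftrightarrow> (\<exists>j. y = (fst x @ replicate (Suc j) G1, snd x @ replicate (Suc j) G1))"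
  by (auto simp: ray_def mem_branch_iff word_prefix_def map_replicate_const child_def replicate_append_same)

lemma ray_not_short: "x \<notin> short_elems N \<Longrightarrow> y \<in> ray x \<Longrightarrow> y \<notin> short_elems N"
  by (auto simp: mem_ray_iff short_elems_def)

text \<open>Distinct frontier elements have disjoint rays: otherwise one of them descends from the
  other along \<open>G1\<close>, so its parent would be too long.\<close>

lemma ray_disjoint:
  assumes x: "x \<in> frontier_elems N" and x': "x' \<in> frontier_elems N" and y: "y \<in> ray x" "y \<in> ray x'"
  shows "x = x'"
proof -
  have descendant: False if "z \<in> frontier_elems N" "z' \<in> frontier_elems N"
    and "z = (fst z' @ replicate d G1, snd z' @ replicate d G1)" "d > 0" for z z' d
  proof -
    have "butlast (w @ replicate d G1) = w @ replicate (d - 1) G1" for w :: word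
      using \<open>d > 0\<close> by (cases d) (simp_all add: butlast_append replicate_append_same[symmetric])
    then have "parent z = (fst z' @ replicate (d - 1) G1, snd z' @ replicate (d - 1) G1)"
      using that(3) by (simp add: parent_def)
    then have "parent z \<notin> short_elems N"
      using that(2) by (auto simp: short_elems_def frontier_elems_def)
    then show False using that(1) by (simp add: frontier_elems_def)
  qed
  have cancel: "a = b @ replicate (n - m) G1" if "a @ replicate m G1 = b @ replicate n G1" "m \<le> n"
    for a b :: word and m n
    using that replicate_add[of "n - m" m G1] by simp
  obtain a b where
    a: "y = (fst x @ replicate (Suc a) G1, snd x @ replicate (Suc a) G1)" and
    b: "y = (fst x' @ replicate (Suc b) G1, snd x' @ replicate (Suc b) G1)"
    using y unfolding mem_ray_iff by blast
  have eq1: "fst x @ replicate (Suc a) G1 = fst x' @ replicate (Suc b) G1"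
    and eq2: "snd x @ replicate (Suc a) G1 = snd x' @ replicate (Suc b) G1"
    using a b by (metis fst_conv, metis snd_conv)
  consider "a = b" | "a < b" | "b < a" by linarith
  then show ?thesis
  proof cases
    case 1
    then show ?thesis using eq1 eq2 by (simp add: prod_eq_iff)
  next
    case 2
    then have "fst x = fst x' @ replicate (Suc b - Suc a) G1" "snd x = snd x' @ replicate (Suc b - Suc a) G1"
      using cancel[OF eq1] cancel[OF eq2] by auto
    then show ?thesis using descendant[OF x x', of "Suc b - Suc a"] 2 by (simp add: prod_eq_iff)
  next
    case 3
    then have "fst x' = fst x @ replicate (Suc a - Suc b) G1" "snd x' = snd x @ replicate (Suc a - Suc b) G1"
      using cancel[OF eq1[symmetric]] cancel[OF eq2[symmetric]] by auto
    then show ?thesis using descendant[OF x' x, of "Suc a - Suc b"] 3 by (simp add: prod_eq_iff)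
  qed
qed

lemma
  fixes f :: "cu \<Rightarrow> complex" and N :: nat
  assumes f: "norm_summable f UNIV"
  defines "R \<equiv> \<lambda>x. if x \<in> frontier_elems N then infsum (\<lambda>y. norm (f y)) (ray x) else 0"
  shows summable_frontier_ray_sums: "R summable_on UNIV"
    and infsum_frontier_ray_sums_le: "infsum R UNIV \<le> infsum (\<lambda>y. norm (f y)) (- short_elems N)"
proof -
  let ?Sig = "Sigma (frontier_elems N) ray"
  have inj: "inj_on snd ?Sig" using ray_disjoint by (auto simp: inj_on_def)
  have sub: "snd ` ?Sig \<subseteq> - short_elems N"
    using ray_not_short by (auto simp: frontier_elems_def)
  have s: "(\<lambda>(x,y). norm (f y)) summable_on ?Sig"
    using summable_on_reindex[OF inj, of "\<lambda>y. norm (f y)"] norm_summable_subset[OF f]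
    by (simp add: o_def case_prod_unfold)
  have R: "infsum R UNIV = infsum (\<lambda>x. infsum (\<lambda>y. norm (f y)) (ray x)) (frontier_elems N)"
    unfolding R_def by (rule infsum_cong_neutral) auto
  have "R summable_on UNIV \<longleftrightarrow> (\<lambda>x. infsum (\<lambda>y. norm (f y)) (ray x)) summable_on frontier_elems N"
    unfolding R_def by (rule summable_on_cong_neutral) auto
  then show "R summable_on UNIV"
    using summable_on_Sigma_banach[OF s] by simp
  have "infsum R UNIV = infsum (\<lambda>(x,y). norm (f y)) ?Sig"
    using R infsum_Sigma'_banach[OF s] by simp
  also have "\<dots> = infsum (\<lambda>y. norm (f y)) (snd ` ?Sig)"
    using infsum_reindex[OF inj, of "\<lambda>y. norm (f y)"] by (simp add: o_def case_prod_unfold)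
  also have "\<dots> \<le> infsum (\<lambda>y. norm (f y)) (- short_elems N)"
    by (rule infsum_mono_neutral) (use sub norm_summable_subset[OF f] in auto)
  finally show "infsum R UNIV \<le> infsum (\<lambda>y. norm (f y)) (- short_elems N)" .
qed

lemma l1norm_approximant_diff_le:
  assumes f: "zero_branch_sums f" and A: "approximant f N \<in> Acal"
  shows "l1norm (\<lambda>t. approximant f N t - f t) \<le> 2 * infsum (\<lambda>y. norm (f y)) (- short_elems N)"
proof -
  have fA: "norm_summable f UNIV"
    using f by (simp add: zero_branch_sums_def Acal_def)
  let ?O = "\<lambda>x. if x \<in> short_elems N then 0 else norm (f x)"
  let ?R = "\<lambda>x. if x \<in> frontier_elems N then infsum (\<lambda>y. norm (f y)) (ray x) else 0"
  have O: "infsum ?O UNIV = infsum (\<lambda>y. norm (f y)) (- short_elems N)"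
    by (rule infsum_cong_neutral) auto
  have "?O summable_on UNIV \<longleftrightarrow> (\<lambda>y. norm (f y)) summable_on (- short_elems N)"
    by (rule summable_on_cong_neutral) auto
  then have sO: "?O summable_on UNIV" using norm_summable_subset[OF fA] by simp
  have diff: "(\<lambda>t. approximant f N t - f t) \<in> Acal"
    using Acal_diff[OF A zero_branch_sums_in_Acal[OF f]] .
  have "l1norm (\<lambda>t. approximant f N t - f t) \<le> infsum (\<lambda>x. ?O x + ?R x) UNIV"
    unfolding l1norm_def
    by (rule infsum_mono) (use diff sO summable_frontier_ray_sums[OF fA] norm_approximant_diff_le[OF f]
        in \<open>auto simp: Acal_def intro: summable_on_add\<close>)
  also have "\<dots> = infsum ?O UNIV + infsum ?R UNIV"
    by (rule infsum_add[OF sO summable_frontier_ray_sums[OF fA]])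
  also have "\<dots> \<le> 2 * infsum (\<lambda>y. norm (f y)) (- short_elems N)"
    using O infsum_frontier_ray_sums_le[OF fA] by simp
  finally show ?thesis .
qed

lemma zero_branch_sums_in_closed_ideal:
  assumes f: "zero_branch_sums f"
    and I: "two_sided_ideal I" and closed: "l1_closed I" and f0: "f0 \<in> I"
  shows "f \<in> I"
proof -
  have approx: "approximant f N \<in> I" for N
    by (rule approximant_in_ideal[OF I f0])
  have bound: "(\<lambda>N. 2 * infsum (\<lambda>y. norm (f y)) (- short_elems N)) \<longlonglongrightarrow> 0"
    using f tendsto_mult_right_zero[OF tendsto_infsum_norm_not_short, of f 2]
    by (simp add: zero_branch_sums_def Acal_def)
  have "(\<lambda>N. l1norm (\<lambda>t. approximant f N t - f t)) \<longlonglongrightarrow> 0"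
    using l1norm_approximant_diff_le[OF f two_sided_ideal_subset[OF I, THEN subsetD, OF approx]]
    by (intro Lim_null_comparison[OF _ bound] always_eventually) (simp add: l1norm_nonneg)
  then show ?thesis
    using closed approx zero_branch_sums_in_Acal[OF f] unfolding l1_closed_def by blast
qed

section \<open>Elements without zero branch sums are invertible\<close>

lemma norm_summable_swap:
  "norm_summable (\<lambda>(x,y). F x y) UNIV \<Longrightarrow> norm_summable (\<lambda>(y,x). F x y) UNIV"
  using summable_on_reindex[OF inj_swap, of "\<lambda>p. norm ((\<lambda>(x,y). F x y) p)" UNIV]
  by (simp add: o_def case_prod_unfold)

lemma
  assumes a: "\<And>k. a k \<in> Acal" and S: "(\<lambda>k. l1norm (a k)) summable_on UNIV"
  shows norm_summable_series_pointwise: "norm_summable (\<lambda>k. a k t) UNIV"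
    and series_in_Acal: "(\<lambda>t. infsum (\<lambda>k. a k t) UNIV) \<in> Acal"
proof -
  have "norm_summable (\<lambda>(k,t). a k t) UNIV"
    using Infinite_Sum.abs_summable_on_Sigma_iff[of "\<lambda>(k,t). a k t" UNIV "\<lambda>_. UNIV"] a S
    by (simp add: Acal_def l1norm_def abs_of_nonneg infsum_nonneg)
  then have "norm_summable (\<lambda>(t,k). a k t) UNIV"
    by (rule norm_summable_swap)
  then have pointwise: "\<forall>t\<in>UNIV. norm_summable (\<lambda>k. a k t) UNIV"
    and rows: "(\<lambda>t. infsum (\<lambda>k. norm (a k t)) UNIV) summable_on UNIV"
    using Infinite_Sum.abs_summable_on_Sigma_iff[of "\<lambda>(t,k). a k t" UNIV "\<lambda>_. UNIV"]
    by (auto simp: abs_of_nonneg infsum_nonneg)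
  then show "norm_summable (\<lambda>k. a k t) UNIV" by blast
  show "(\<lambda>t. infsum (\<lambda>k. a k t) UNIV) \<in> Acal"
    unfolding Acal_iff_norm_summable using pointwise
    by (intro Infinite_Sum.abs_summable_on_comparison_test'[OF rows] norm_infsum_bound) auto
qed

lemma conv_series_left:
  assumes a: "\<And>k. a k \<in> Acal" and S: "(\<lambda>k. l1norm (a k)) summable_on UNIV" and r: "r \<in> Acal"
  shows "conv (\<lambda>t. infsum (\<lambda>k. a k t) UNIV) r t = infsum (\<lambda>k. conv (a k) r t) UNIV"
proof -
  let ?F = "{x. case_prod cu_mult x = Some t}"
  have rows: "\<forall>k\<in>UNIV. norm_summable (\<lambda>x. tensor (a k) r x) UNIV"
    using a r by (simp add: Acal_iff_norm_summable norm_summable_tensor)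
  have "(\<lambda>k. norm (infsum (\<lambda>x. norm (tensor (a k) r x)) UNIV)) = (\<lambda>k. l1norm (a k) * l1norm r)"
    using a r by (simp add: fun_eq_iff infsum_norm_tensor Acal_iff_norm_summable l1norm_def
        infsum_nonneg abs_of_nonneg)
  then have "norm_summable (\<lambda>k. infsum (\<lambda>x. norm (tensor (a k) r x)) UNIV) UNIV"
    using summable_on_cmult_left[OF S, of "l1norm r"] by simp
  then have "norm_summable (\<lambda>(k,x). tensor (a k) r x) UNIV"
    using rows Infinite_Sum.abs_summable_on_Sigma_iff[of "\<lambda>(k,x). tensor (a k) r x" UNIV "\<lambda>_. UNIV"]
    by simp
  then have "(\<lambda>(x,k). tensor (a k) r x) summable_on (?F \<times> UNIV)"
    by (rule summable_on_if_norm_summable[OF norm_summable_swap])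
  then have "infsum (\<lambda>x. infsum (\<lambda>k. tensor (a k) r x) UNIV) ?F
      = infsum (\<lambda>k. infsum (\<lambda>x. tensor (a k) r x) ?F) UNIV"
    by (rule infsum_swap_banach)
  moreover have "infsum (\<lambda>k. tensor (a k) r x) UNIV = tensor (\<lambda>t. infsum (\<lambda>k. a k t) UNIV) r x" for x
    by (simp add: tensor_def infsum_cmult_left')
  ultimately show ?thesis
    by (simp add: conv_eq_pushforward pushforward_def)
qed

fun conv_power :: "(cu \<Rightarrow> complex) \<Rightarrow> nat \<Rightarrow> cu \<Rightarrow> complex" where
  "conv_power r 0 = delta_e"
| "conv_power r (Suc k) = conv (conv_power r k) r"

lemma conv_power_in_Acal: "r \<in> Acal \<Longrightarrow> conv_power r k \<in> Acal"
  by (induction k) (auto simp: delta_e_in_Acal conv_in_Acal)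

lemma l1norm_conv_power_le: "r \<in> Acal \<Longrightarrow> l1norm (conv_power r k) \<le> l1norm r ^ k"
proof (induction k)
  case (Suc k)
  have "l1norm (conv_power r (Suc k)) \<le> l1norm (conv_power r k) * l1norm r"
    using l1norm_conv_le[OF conv_power_in_Acal[OF Suc.prems] Suc.prems] by simp
  also have "\<dots> \<le> l1norm r ^ k * l1norm r"
    by (rule mult_right_mono[OF Suc.IH[OF Suc.prems] l1norm_nonneg])
  finally show ?case by (simp add: mult.commute)
qed (simp add: l1norm_delta_e)

text \<open>Neumann series: \<open>\<Sum>\<^sub>k r\<^sup>k\<close> is a left inverse of \<open>\<delta>\<^sub>e - r\<close>.\<close>

lemma left_inverse_if_l1norm_less_1:
  assumes r: "r \<in> Acal" and small: "l1norm r < 1"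
  shows "\<exists>u\<in>Acal. conv u (\<lambda>t. delta_e t - r t) = delta_e"
proof -
  let ?a = "conv_power r"
  have a: "\<And>k. ?a k \<in> Acal" using conv_power_in_Acal[OF r] .
  have "(\<lambda>k. l1norm r ^ k) summable_on UNIV"
    using summable_on_UNIV_nonneg_real_iff[of "\<lambda>k. l1norm r ^ k"] summable_geometric[of "l1norm r"]
      l1norm_nonneg[of r] small by simp
  then have "(\<lambda>k. norm (l1norm (?a k))) summable_on UNIV"
    by (rule Infinite_Sum.abs_summable_on_comparison_test')
      (simp add: l1norm_nonneg l1norm_conv_power_le[OF r])
  then have S: "(\<lambda>k. l1norm (?a k)) summable_on UNIV"
    by (simp add: l1norm_nonneg)
  define u where "u = (\<lambda>t. infsum (\<lambda>k. ?a k t) UNIV)"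
  have uA: "u \<in> Acal" using series_in_Acal[OF a S] by (simp add: u_def)
  have shift: "u t = delta_e t + conv u r t" for t
  proof -
    have summable: "(\<lambda>k. ?a k t) summable_on UNIV"
      using summable_on_if_norm_summable[OF norm_summable_series_pointwise[OF a S]] .
    have U: "(UNIV :: nat set) = insert 0 (range Suc)"
      using not0_implies_Suc by auto
    have "u t = ?a 0 t + infsum (\<lambda>k. ?a k t) (range Suc)"
      unfolding u_def by (subst U, rule infsum_insert) (auto intro: summable_on_subset_banach[OF summable])
    also have "infsum (\<lambda>k. ?a k t) (range Suc) = infsum (\<lambda>k. ?a (Suc k) t) UNIV"
      by (subst infsum_reindex) (auto simp: o_def)
    finally show ?thesis
      unfolding u_def by (simp add: conv_series_left[OF a S r])
  qed
  have "conv u (\<lambda>t. delta_e t - r t) = (\<lambda>t. conv u delta_e t - conv u r t)"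
    by (rule conv_diff_right) (use r uA delta_e_in_Acal in auto)
  also have "\<dots> = delta_e" using shift by (simp add: fun_eq_iff)
  finally show ?thesis using uA by blast
qed

text \<open>\<open>sandwich a b\<close> is the partial map \<open>x \<mapsto> s\<^sub>a\<^sup>* x s\<^sub>b\<close>.\<close>

definition sandwich :: "word \<Rightarrow> word \<Rightarrow> cu \<Rightarrow> cu option" where
  "sandwich a b x = Option.bind (cu_mult ([],a) x) (\<lambda>y. cu_mult y (b,[]))"

lemma conv_sandwich:
  assumes "f \<in> Acal"
  shows "conv (conv (delta ([],a)) f) (delta (b,[])) = pushforward (sandwich a b) f"
  using assms
  by (simp add: conv_delta_left conv_delta_right pushforward_comp Acal_iff_norm_summable sandwich_def[abs_def])

lemma cu_mult_Nil_left:
  "cu_mult ([],a) (i,j) = (if \<exists>k'. i = a @ k' then Some (drop (length a) i, j)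
     else if \<exists>j'. a = i @ j' then Some ([], j @ drop (length i) a) else None)"
  and cu_mult_Nil_right:
  "cu_mult (x,y) (b,[]) = (if \<exists>k'. b = y @ k' then Some (x @ drop (length y) b, [])
     else if \<exists>j'. y = b @ j' then Some (x, drop (length b) y) else None)"
  by (simp_all add: cu_mult_def)

lemma sandwich_eq_unit_iff: "sandwich a b (i,j) = Some ([],[]) \<longleftrightarrow> (\<exists>s. a = i @ s \<and> b = j @ s)"
proof
  assume unit: "sandwich a b (i,j) = Some ([],[])"
  show "\<exists>s. a = i @ s \<and> b = j @ s"
  proof (cases "\<exists>k'. i = a @ k'")
    case True
    then obtain k' where k': "i = a @ k'" by blast
    then have "cu_mult (k', j) (b,[]) = Some ([],[])" using unit by (simp add: sandwich_def cu_mult_Nil_left)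
    then show ?thesis using k' by (auto simp: cu_mult_Nil_right split: if_splits)
  next
    case False
    then obtain j' where j': "a = i @ j'" using unit by (auto simp: sandwich_def cu_mult_Nil_left split: if_splits)
    then have "cu_mult ([], j @ j') (b,[]) = Some ([],[])" using unit False by (simp add: sandwich_def cu_mult_Nil_left)
    then show ?thesis using j' by (auto simp: cu_mult_Nil_right split: if_splits)
  qed
next
  assume "\<exists>s. a = i @ s \<and> b = j @ s"
  then obtain s where a: "a = i @ s" and b: "b = j @ s" by blast
  show "sandwich a b (i,j) = Some ([],[])"
  proof (cases "s = []")
    case True
    then show ?thesis using a b by (simp add: sandwich_def cu_mult_Nil_left cu_mult_Nil_right)
  next
    case False
    then have "\<not> (\<exists>k'. i = a @ k')" using a by auto
    then have "cu_mult ([],a) (i,j) = Some ([], b)" using a b by (simp add: cu_mult_Nil_left)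
    then show ?thesis by (simp add: sandwich_def cu_mult_Nil_right)
  qed
qed

lemma marker_no_overlap:
  assumes e: "X @ T @ Y = Z @ T" and T: "T = replicate M G1 @ [G2]"
    and Y: "0 < length Y" "length Y \<le> M"
  shows False
proof -
  have lT: "length T = Suc M" using T by simp
  have lZ: "length Z = length X + length Y" using arg_cong[OF e, of length] by simp
  have "drop (length Z) (X @ T @ Y) = drop (length Y) T @ Y"
    using lZ lT Y by simp
  then have d: "drop (length Y) T @ Y = T" using e by simp
  have "(drop (length Y) T @ Y) ! (M - length Y) = drop (length Y) T ! (M - length Y)"
    using lT Y by (simp add: nth_append Suc_diff_le)
  also have "\<dots> = T ! M" using lT Y by simp
  also have "\<dots> = G2" using T by (simp add: nth_append)
  finally have "T ! (M - length Y) = G2" using d by simp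
  moreover have "M - length Y < M" using Y by linarith
  then have "T ! (M - length Y) = G1" using T by (simp add: nth_append)
  ultimately show False by simp
qed

lemma sandwich_short:
  assumes P: "sandwich a b (i,j) = Some t"
    and a: "a = (c @ w) @ T" and b: "b = (d @ w) @ T" and T: "T = replicate M G1 @ [G2]"
    and i: "length i \<le> K" and j: "length j \<le> K" and KL: "K \<le> length w" and KM: "K + length c + length d \<le> M"
  shows "t = ([],[])"
proof -
  define A' where "A' = drop (length i) (c @ w)"
  have not_prefix: "\<not> (\<exists>k'. i = a @ k')" using i KL a T by auto
  then obtain j' where j': "a = i @ j'"
    using P by (auto simp: sandwich_def cu_mult_Nil_left split: if_splits)
  have "length i \<le> length (c @ w)" using i KL by simp
  then have "drop (length i) a = A' @ T" using a by (simp add: A'_def)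
  then have aa: "a = i @ (A' @ T)" using j' by simp
  then have "cu_mult ([],a) (i,j) = Some ([], j @ A' @ T)"
    using not_prefix by (simp add: cu_mult_Nil_left)
  then have P2: "cu_mult ([], j @ A' @ T) (b,[]) = Some t"
    using P by (simp add: sandwich_def)
  have len: "length b = length d + length w + Suc M" "length a = length c + length w + Suc M"
    using a b T by simp_all
  have lA: "length (A' @ T) = length a - length i" using aa by simp
  show ?thesis
  proof (cases "\<exists>k''. b = (j @ A' @ T) @ k''")
    case True
    then obtain k'' where k: "b = (j @ A' @ T) @ k''" by blast
    then have t: "t = (k'', [])" using P2 by (simp add: cu_mult_Nil_right)
    show ?thesis
    proof (cases "k'' = []")
      case False
      have "length k'' \<le> M" using k len lA i j KM by simp
      moreover have "(j @ A') @ T @ k'' = (d @ w) @ T" using k b by simp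
      ultimately show ?thesis using marker_no_overlap[OF _ T] False by blast
    qed (use t in simp)
  next
    case False
    then obtain z where z: "j @ A' @ T = b @ z" using P2 by (simp add: cu_mult_Nil_right split: if_splits)
    then have t: "t = ([], z)" using P2 False by (simp add: cu_mult_Nil_right)
    show ?thesis
    proof (cases "z = []")
      case False
      have "length z \<le> M" using arg_cong[OF z, of length] len lA i j KM by simp
      moreover have "(d @ w) @ T @ z = (j @ A') @ T" using z b by simp
      ultimately show ?thesis using marker_no_overlap[OF _ T] False by blast
    qed (use t in simp)
  qed
qed

text \<open>A common suffix of \<open>(c w, d w)\<close> with \<open>(c, d)\<close> a root can only be split off
  inside \<open>w\<close>, since \<open>c\<close> and \<open>d\<close> end in different letters.\<close>

lemma common_suffix_root:
  assumes root: "\<not> has_parent (c,d)" and e1: "c @ w = i @ s" and e2: "d @ w = j @ s"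
  shows "\<exists>t \<le> length w. i = c @ take t w \<and> j = d @ take t w"
proof (cases "length s \<le> length w")
  case True
  have l1: "length c \<le> length i" using arg_cong[OF e1, of length] True by simp
  have l2: "length d \<le> length j" using arg_cong[OF e2, of length] True by simp
  have i: "i = c @ drop (length c) i" and wi: "w = drop (length c) i @ s"
    using e1 l1 by (auto simp: append_eq_append_conv_if) (metis append_take_drop_id)+
  have j: "j = d @ drop (length d) j" and wj: "w = drop (length d) j @ s"
    using e2 l2 by (auto simp: append_eq_append_conv_if) (metis append_take_drop_id)+
  have "drop (length c) i = take (length w - length s) w" "drop (length d) j = take (length w - length s) w"
    using wi wj by (metis append_eq_conv_conj length_append add_diff_cancel_right')+
  then show ?thesis using i j by (intro exI[of _ "length w - length s"]) auto
next
  case False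
  have l1: "length i < length c" using arg_cong[OF e1, of length] False by simp
  have l2: "length j < length d" using arg_cong[OF e2, of length] False by simp
  have c: "c = i @ drop (length i) c" and sc: "s = drop (length i) c @ w"
    using e1 l1 by (auto simp: append_eq_append_conv_if) (metis append_take_drop_id)+
  have d: "d = j @ drop (length j) d" and sd: "s = drop (length j) d @ w"
    using e2 l2 by (auto simp: append_eq_append_conv_if) (metis append_take_drop_id)+
  have eq: "drop (length i) c = drop (length j) d" using sc sd by simp
  have ne: "drop (length i) c \<noteq> []" using l1 by simp
  have "last c = last (drop (length i) c)" using c ne by (metis last_appendR)
  moreover have "last d = last (drop (length i) c)" using d ne eq by (metis last_appendR)
  moreover have "c \<noteq> []" "d \<noteq> []" using l1 l2 by auto
  ultimately show ?thesis using root by (simp add: has_parent_def)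
qed

definition long_elems :: "nat \<Rightarrow> cu set" where
  "long_elems K = {x. K < length (fst x) \<or> K < length (snd x)}"

lemma long_elems_subset_not_short: "long_elems K \<subseteq> - short_elems K"
  by (auto simp: long_elems_def short_elems_def)

lemma
  assumes root: "\<not> has_parent (c,d)" and KL: "K \<le> L"
    and a: "a = (c @ word_prefix n L) @ T" and b: "b = (d @ word_prefix n L) @ T"
    and T: "T = replicate (K + length c + length d) G1 @ [G2]"
  shows branch_subset_vimage_sandwich_unit:
      "branch_elem (c,d) n ` {..L} \<subseteq> sandwich a b -` {Some ([],[])}"
    and vimage_sandwich_unit_subset:
      "sandwich a b -` {Some ([],[])} \<subseteq> branch_elem (c,d) n ` {..L} \<union> long_elems K"
    and vimage_sandwich_not_unit_subset:
      "sandwich a b -` Some ` (- {([],[])}) \<subseteq> long_elems K"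
proof -
  show "branch_elem (c,d) n ` {..L} \<subseteq> sandwich a b -` {Some ([],[])}"
  proof
    fix x assume "x \<in> branch_elem (c,d) n ` {..L}"
    then obtain t where t: "t \<le> L" "x = (c @ word_prefix n t, d @ word_prefix n t)"
      by (auto simp: branch_elem_def)
    then have "word_prefix n L = word_prefix n t @ drop t (word_prefix n L)"
      using take_word_prefix[of t L n] by (metis append_take_drop_id)
    then have "sandwich a b (c @ word_prefix n t, d @ word_prefix n t) = Some ([],[])"
      unfolding sandwich_eq_unit_iff a b
      by (intro exI[of _ "drop t (word_prefix n L) @ T"]) (metis append.assoc)
    then show "x \<in> sandwich a b -` {Some ([],[])}" using t by simp
  qed
  show "sandwich a b -` {Some ([],[])} \<subseteq> branch_elem (c,d) n ` {..L} \<union> long_elems K"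
  proof (rule subsetI, rule ccontr)
    fix x assume x: "x \<in> sandwich a b -` {Some ([],[])}"
      and not: "x \<notin> branch_elem (c,d) n ` {..L} \<union> long_elems K"
    obtain i j where ij: "x = (i,j)" by (cases x)
    then have unit: "sandwich a b (i,j) = Some ([],[])" using x by simp
    have short: "length i \<le> K" using not ij by (auto simp: long_elems_def)
    obtain s where "a = i @ s" "b = j @ s" using unit sandwich_eq_unit_iff by blast
    then obtain t where t: "t \<le> length (word_prefix n L @ T)"
      "i = c @ take t (word_prefix n L @ T)" "j = d @ take t (word_prefix n L @ T)"
      using common_suffix_root[OF root, of "word_prefix n L @ T" i s j] a b by auto
    have "t \<le> K" using short t(1,2) by (auto simp: min_def split: if_splits)
    then have "x = branch_elem (c,d) n t"
      using t KL ij by (simp add: branch_elem_def take_word_prefix)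
    then show False using not \<open>t \<le> K\<close> KL by auto
  qed
  show "sandwich a b -` Some ` (- {([],[])}) \<subseteq> long_elems K"
  proof (rule subsetI, rule ccontr)
    fix x assume "x \<in> sandwich a b -` Some ` (- {([],[])})" "x \<notin> long_elems K"
    then obtain i j t where "x = (i,j)" "sandwich a b (i,j) = Some t" "t \<noteq> ([],[])" "(i,j) \<notin> long_elems K"
      by (cases x) auto
    then show False
      using sandwich_short[where K=K, OF _ a b T] KL
      by (auto simp: long_elems_def)
  qed
qed

lemma l1norm_diff_scaled_delta_e:
  assumes "F \<in> Acal"
  shows "l1norm (\<lambda>t. F t - \<sigma> * delta_e t)
    = norm (F ([],[]) - \<sigma>) + infsum (\<lambda>t. norm (F t)) (- {([],[])})"
proof -
  have "(\<lambda>t. F t - \<sigma> * delta_e t) \<in> Acal"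
    using assms by (intro Acal_diff Acal_scale delta_e_in_Acal)
  then have s: "(\<lambda>t. norm (F t - \<sigma> * delta_e t)) summable_on - {([],[])}"
    by (simp add: Acal_def norm_summable_subset)
  have U: "(UNIV :: cu set) = insert ([],[]) (- {([],[])})" by auto
  have "l1norm (\<lambda>t. F t - \<sigma> * delta_e t)
      = norm (F ([],[]) - \<sigma>) + infsum (\<lambda>t. norm (F t - \<sigma> * delta_e t)) (- {([],[])})"
    unfolding l1norm_def by (subst U, subst infsum_insert[OF s]) (auto simp: delta_e_def delta_def)
  also have "infsum (\<lambda>t. norm (F t - \<sigma> * delta_e t)) (- {([],[])}) = infsum (\<lambda>t. norm (F t)) (- {([],[])})"
    by (rule infsum_cong) (auto simp: delta_e_def delta_def)
  finally show ?thesis .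
qed

text \<open>If the sum \<open>\<sigma>\<close> of \<open>f\<close> along a root branch is nonzero, compressing \<open>f\<close> with
  \<open>s\<^sub>a\<^sup>* _ s\<^sub>b\<close>, where \<open>a\<close> and \<open>b\<close> run far down the branch and end with a marker
  word, moves a long initial piece of the branch onto the unit and everything else of small
  length to zero; the tails are small, so the result is close to \<open>\<sigma> \<delta>\<^sub>e\<close>.\<close>

lemma compression_close_to_unit:
  assumes f: "f \<in> Acal" and root: "\<not> has_parent (c,d)"
    and \<sigma>: "\<sigma> = infsum f (branch (c,d) n)" "\<sigma> \<noteq> 0"
  shows "\<exists>a b. l1norm (\<lambda>t. pushforward (sandwich a b) f t - \<sigma> * delta_e t) < norm \<sigma>"
proof -
  have F: "norm_summable f UNIV" using f by (simp add: Acal_def)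
  define \<epsilon> where "\<epsilon> = norm \<sigma> / 4"
  have \<epsilon>: "\<epsilon> > 0" using \<sigma> by (simp add: \<epsilon>_def)
  obtain K where K: "infsum (\<lambda>x. norm (f x)) (- short_elems K) < \<epsilon>"
    using LIMSEQ_D[OF tendsto_infsum_norm_not_short[OF F] \<epsilon>] by (auto simp: infsum_nonneg)
  obtain L0 where L0: "\<And>L. L \<ge> L0 \<Longrightarrow> norm ((\<Sum>l<L. f (branch_elem (c,d) n l)) - \<sigma>) < \<epsilon>"
    using LIMSEQ_D[OF sums_branch[OF f, of "(c,d)" n, unfolded sums_def] \<epsilon>] \<sigma>(1) by auto
  define L where "L = max K L0"
  define T where "T = replicate (K + length c + length d) G1 @ [G2]"
  define a where "a = (c @ word_prefix n L) @ T"
  define b where "b = (d @ word_prefix n L) @ T"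
  have KL: "K \<le> L" by (simp add: L_def)
  note vimages = branch_subset_vimage_sandwich_unit[OF root KL a_def b_def T_def]
    vimage_sandwich_unit_subset[OF root KL a_def b_def T_def]
    vimage_sandwich_not_unit_subset[OF root KL a_def b_def T_def]
  let ?G = "pushforward (sandwich a b) f"
  let ?D = "sandwich a b -` {Some ([],[])}"
  let ?D1 = "branch_elem (c,d) n ` {..L}"
  define tail where "tail = infsum (\<lambda>x. norm (f x)) (long_elems K)"
  have "tail \<le> infsum (\<lambda>x. norm (f x)) (- short_elems K)"
    unfolding tail_def
    by (rule infsum_mono_neutral) (use long_elems_subset_not_short norm_summable_subset[OF F] in auto)
  then have tail: "0 \<le> tail" "tail < \<epsilon>"
    using K by (auto simp: tail_def infsum_nonneg)
  define P where "P = (\<Sum>l<Suc L. f (branch_elem (c,d) n l))"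
  define R where "R = infsum f (?D - ?D1)"
  have "infsum f ?D1 = P"
    unfolding P_def
    by (subst infsum_reindex) (auto simp: lessThan_Suc_atMost intro: inj_on_subset[OF inj_branch_elem])
  then have "?G ([],[]) = P + R"
    using infsum_Un_disjoint[of f ?D1 "?D - ?D1"] vimages(1) summable_on_if_norm_summable[OF F]
    by (simp add: R_def pushforward_def Un_absorb1 Diff_partition vimage_def)
  moreover have "norm (P - \<sigma>) < \<epsilon>"
    unfolding P_def by (rule L0) (simp add: L_def)
  moreover have "norm R \<le> tail"
    unfolding tail_def R_def
    by (rule order_trans[OF norm_infsum_bound infsum_mono_neutral])
      (use vimages(2) norm_summable_subset[OF F] in auto)
  ultimately have "norm (?G ([],[]) - \<sigma>) < \<epsilon> + tail"
    using norm_triangle_ineq[of "P - \<sigma>" R] by (simp add: algebra_simps)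
  moreover have "infsum (\<lambda>t. norm (?G t)) (- {([],[])}) \<le> tail"
    unfolding tail_def
    by (rule order_trans[OF infsum_norm_pushforward_le[OF F] infsum_mono_neutral])
      (use vimages(3) norm_summable_subset[OF F] in auto)
  ultimately have "l1norm (\<lambda>t. ?G t - \<sigma> * delta_e t) < \<epsilon> + tail + tail"
    using l1norm_diff_scaled_delta_e[of ?G \<sigma>] norm_summable_pushforward[OF F, of "sandwich a b" UNIV]
    by (simp add: Acal_def)
  also have "\<dots> < norm \<sigma>" using tail by (simp add: \<epsilon>_def)
  finally show ?thesis by blast
qed

lemma invertible_if_not_zero_branch_sums:
  assumes f: "f \<in> Acal" and nonzero: "\<not> zero_branch_sums f"
  shows "\<exists>g\<in>Acal. \<exists>h\<in>Acal. conv (conv g f) h = delta_e"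
proof -
  obtain c d n where root: "\<not> has_parent (c,d)" and \<sigma>: "infsum f (branch (c,d) n) \<noteq> 0"
    using nonzero f by (auto simp: zero_branch_sums_def)
  define \<sigma> where "\<sigma> = infsum f (branch (c,d) n)"
  obtain a b where ab: "l1norm (\<lambda>t. pushforward (sandwich a b) f t - \<sigma> * delta_e t) < norm \<sigma>"
    using compression_close_to_unit[OF f root \<sigma>_def] \<sigma> by (auto simp: \<sigma>_def)
  define G where "G = conv (conv (delta ([],a)) f) (delta (b,[]))"
  have GA: "G \<in> Acal" by (simp add: G_def conv_in_Acal delta_in_Acal f)
  have "\<sigma> \<noteq> 0" using \<sigma> by (simp add: \<sigma>_def)
  define r where "r = (\<lambda>t. delta_e t - (1/\<sigma>) * G t)"
  have rA: "r \<in> Acal" unfolding r_def by (intro Acal_diff Acal_scale GA delta_e_in_Acal)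
  have "r = (\<lambda>t. (- 1/\<sigma>) * (G t - \<sigma> * delta_e t))"
    using \<open>\<sigma> \<noteq> 0\<close> by (auto simp: r_def fun_eq_iff field_simps)
  then have "l1norm r = norm (- 1/\<sigma>) * l1norm (\<lambda>t. G t - \<sigma> * delta_e t)"
    by (simp only: l1norm_scale)
  also have "\<dots> = l1norm (\<lambda>t. G t - \<sigma> * delta_e t) / norm \<sigma>"
    by (simp add: norm_divide)
  also have "\<dots> < 1"
    using ab \<open>\<sigma> \<noteq> 0\<close> by (simp add: G_def conv_sandwich[OF f])
  finally obtain u where uA: "u \<in> Acal" and u: "conv u (\<lambda>t. delta_e t - r t) = delta_e"
    using left_inverse_if_l1norm_less_1[OF rA] by blast
  define u' where "u' = (\<lambda>t. (1/\<sigma>) * u t)"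
  have u'A: "u' \<in> Acal" unfolding u'_def using uA by (rule Acal_scale)
  define g where "g = conv u' (delta ([],a))"
  have gA: "g \<in> Acal" unfolding g_def by (intro conv_in_Acal u'A delta_in_Acal)
  have "conv (conv g f) (delta (b,[])) = conv u' G"
    unfolding g_def G_def using u'A f by (simp add: conv_assoc delta_in_Acal conv_in_Acal)
  also have "\<dots> = conv u (\<lambda>t. (1/\<sigma>) * G t)"
    unfolding u'_def by (simp only: conv_scale_left conv_scale_right)
  also have "(\<lambda>t. (1/\<sigma>) * G t) = (\<lambda>t. delta_e t - r t)"
    by (simp add: r_def)
  finally show ?thesis using u gA delta_in_Acal by metis
qed

lemma Jcal_eq_zero_branch_sums: "Jcal = Collect zero_branch_sums"
  using zero_branch_sums_ideal zero_branch_sums_closed zero_branch_sums_f0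
    zero_branch_sums_in_closed_ideal
  unfolding Jcal_def by blast

lemma not_invertible_if_zero_branch_sums:
  assumes f: "zero_branch_sums f"
  shows "\<not> (\<exists>g\<in>Acal. \<exists>h\<in>Acal. conv (conv g f) h = delta_e)"
proof
  assume "\<exists>g\<in>Acal. \<exists>h\<in>Acal. conv (conv g f) h = delta_e"
  then obtain g h where "g \<in> Acal" "h \<in> Acal" and unit: "conv (conv g f) h = delta_e" by blast
  then have "zero_branch_sums (conv (conv g f) h)"
    using f by (intro zero_branch_sums_conv_right zero_branch_sums_conv_left)
  then show False using unit not_zero_branch_sums_delta_e by simp
qed

lemma two_sided_ideal_eq_Acal:
  assumes I: "two_sided_ideal I" and "delta_e \<in> I"
  shows "I = Acal"
proof
  show "Acal \<subseteq> I"
    using two_sided_ideal_conv_left[OF I _ assms(2)] by (metis conv_delta_e_right subsetI)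
qed (rule two_sided_ideal_subset[OF I])

lemma Jcal_iff_not_invertible:
  assumes "f \<in> Acal"
  shows "f \<in> Jcal \<longleftrightarrow> \<not> (\<exists>g\<in>Acal. \<exists>h\<in>Acal. conv (conv g f) h = delta_e)"
  using assms invertible_if_not_zero_branch_sums not_invertible_if_zero_branch_sums
  by (auto simp: Jcal_eq_zero_branch_sums)

lemma proper_ideal_subset_Jcal:
  assumes I: "two_sided_ideal I" and proper: "I \<noteq> Acal"
  shows "I \<subseteq> Jcal"
proof
  fix f assume f: "f \<in> I"
  show "f \<in> Jcal"
  proof (rule ccontr)
    assume "f \<notin> Jcal"
    then obtain g h where "g \<in> Acal" "h \<in> Acal" "conv (conv g f) h = delta_e"
      using Jcal_iff_not_invertible two_sided_ideal_subset[OF I] f by blast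
    then have "delta_e \<in> I"
      using f two_sided_ideal_conv_left[OF I] two_sided_ideal_conv_right[OF I] by metis
    then show False using two_sided_ideal_eq_Acal[OF I] proper by blast
  qed
qed

theorem theorem3p15:
  shows "(\<forall>f\<in>Acal.
            (f \<in> Jcal \<longleftrightarrow> (\<forall>v. without_symmetric_core v \<longrightarrow> zero_sums_at f v))
          \<and> (f \<in> Jcal \<longleftrightarrow> \<not> (\<exists>g\<in>Acal. \<exists>h\<in>Acal. conv (conv g f) h = delta_e)))
       \<and> Jcal = {f \<in> Acal. \<not> (\<exists>g\<in>Acal. \<exists>h\<in>Acal. conv (conv g f) h = delta_e)}
       \<and> two_sided_ideal Jcal \<and> Jcal \<noteq> Acal
       \<and> (\<forall>I. two_sided_ideal I \<and> I \<noteq> Acal \<longrightarrow> I \<subseteq> Jcal)"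
proof -
  have "Jcal \<noteq> Acal"
    using not_zero_branch_sums_delta_e delta_e_in_Acal by (auto simp: Jcal_eq_zero_branch_sums)
  moreover have "Jcal = {f \<in> Acal. \<not> (\<exists>g\<in>Acal. \<exists>h\<in>Acal. conv (conv g f) h = delta_e)}"
    using Jcal_iff_not_invertible zero_branch_sums_in_Acal by (auto simp: Jcal_eq_zero_branch_sums)
  moreover have "two_sided_ideal Jcal"
    using zero_branch_sums_ideal by (simp add: Jcal_eq_zero_branch_sums)
  moreover have "f \<in> Jcal \<longleftrightarrow> (\<forall>v. without_symmetric_core v \<longrightarrow> zero_sums_at f v)"
    if "f \<in> Acal" for f
    using zero_branch_sums_iff[OF that] by (simp add: Jcal_eq_zero_branch_sums)
  ultimately show ?thesis
    using Jcal_iff_not_invertible proper_ideal_subset_Jcal by blast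
qed

end
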